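(* For every $k\ge0$ and $\delta\in\mathbb{R}$, the operator $X:\mathcal{S}^k_\delta\to\mathcal{S}^{k+1}_{\delta+\frac1{n+1}}$ commutes with the action of the Lie algebra $sp(2n+2)$, i.e. $X\circ L_Z=L_Z\circ X$ for all $Z\in sp(2n+2)$. It does not commute with the action of $\mathcal{C}(\mathbb{R}^{2n+1})$ unless $k=0$ (for $k\ge1$ there is $Z\in\mathcal{C}(\mathbb{R}^{2n+1})$, e.g. the contact vector field associated with the function $(q^1)^3$, with $X\circ L_Z\neq L_Z\circ X$).
   Context: Let $n\ge1$, $M=\mathbb{R}^{2n+1}$ with coordinates $x=(q^1,\dots,q^n,p^1,\dots,p^n,t)$ and contact form $\alpha=\frac12\big(\sum_{i=1}^n(p^idq^i-q^idp^i)-dt\big)$. $\mathcal{C}(M)=\{Z\in\mathrm{Vect}(M):L_Z\alpha=f_Z\alpha\text{ for some smooth }f_Z\}$. The projective algebra $sl(2n+2)\subset\mathrm{Vect}(M)$ is spanned by constant vector fields, linear vector fields, and the quadratic fields $\eta(x)\mathcal{E}$ with $\eta$ a linear form and $\mathcal{E}=\sum_jx^j\partial_{x^j}$ the Euler field; $sp(2n+2):=\mathcal{C}(M)\cap sl(2n+2)$. For $\delta\in\mathbb{R}$, $\mathcal{S}^k_\delta$ is the space of smooth symmetric contravariant $k$-tensor fields with coefficients in $\delta$-densities, identified with smooth functions $S(x,\xi)$ homogeneous polynomial of degree $k$ in $\xi=(\xi_{q^1},\dots,\xi_{q^n},\xi_{p^1},\dots,\xi_{p^n},\xi_t)$; a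 vector field $Y=\sum_jY^j\partial_{x^j}$ acts by $L_YS=\sum_jY^j\partial_{x^j}S+\delta(\sum_j\partial_{x^j}Y^j)S-\sum_{j,l}(\partial_{x^l}Y^j)\xi_j\partial_{\xi_l}S$. Let $E_s=\sum_i(p^i\partial_{p^i}+q^i\partial_{q^i})$, $\langle E_s,\xi\rangle=\sum_i(p^i\xi_{p^i}+q^i\xi_{q^i})$, $D(S)=\sum_i(\xi_{q^i}\partial_{p^i}S-\xi_{p^i}\partial_{q^i}S)+\xi_tE_s(S)-\langle E_s,\xi\rangle\partial_tS$. The Hamiltonian operator is $X(S)=D(S)+a(k,\delta)\xi_tS$ for $S\in\mathcal{S}^k_\delta$, with $a(k,\delta)=2(n+1)\delta-k$. The contact vector field associated with a function $f$ is $X(f)$ for $f$ viewed as a $-\frac1{n+1}$-density (i.e. the $k=0$, $\delta=-\frac1{n+1}$ case of $X$, read as a vector field via $\xi$-linearity). *)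

theory Defs
  imports "HOL-Analysis.Analysis"
begin

text \<open>Coordinates of M = R^(2n+1): the index type is 'n + ('n + unit), where
  CARD('n) = n; Inl i is q^i, Inr (Inl i) is p^i, Inr (Inr ()) is t.\<close>

type_synonym 'n idx = "'n + 'n + unit"

definition qc :: "'n \<Rightarrow> 'n idx" where "qc i = Inl i"
definition pc :: "'n \<Rightarrow> 'n idx" where "pc i = Inr (Inl i)"
definition tc :: "'n idx" where "tc = Inr (Inr ())"

definition pd :: "'i::finite \<Rightarrow> (real^'i \<Rightarrow> real) \<Rightarrow> real^'i \<Rightarrow> real" where
  "pd j F x = deriv (\<lambda>s. F (x + s *\<^sub>R axis j 1)) 0"

definition iter_pd :: "'i::finite list \<Rightarrow> (real^'i \<Rightarrow> real) \<Rightarrow> real^'i \<Rightarrow> real" where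
  "iter_pd js F = foldr pd js F"

definition smooth_fun :: "(real^'i::finite \<Rightarrow> real) \<Rightarrow> bool" where
  "smooth_fun F \<longleftrightarrow> (\<forall>js x. iter_pd js F differentiable (at x))"

definition smooth_vf :: "(real^'i::finite \<Rightarrow> real^'i) \<Rightarrow> bool" where
  "smooth_vf Y \<longleftrightarrow> (\<forall>j. smooth_fun (\<lambda>x. Y x $ j))"

fun hom_poly :: "nat \<Rightarrow> (real^'i::finite \<Rightarrow> real) \<Rightarrow> bool" where
  "hom_poly 0 f \<longleftrightarrow> (\<exists>c. f = (\<lambda>\<xi>. c))"
| "hom_poly (Suc k) f \<longleftrightarrow>
     (\<exists>g. (\<forall>j. hom_poly k (g j)) \<and> f = (\<lambda>\<xi>. \<Sum>j\<in>UNIV. \<xi> $ j * g j \<xi>))"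

text \<open>Elements of S^k_delta (as functions S x xi); the density weight only enters the action.\<close>
definition symbol :: "nat \<Rightarrow> (real^'i::finite \<Rightarrow> real^'i \<Rightarrow> real) \<Rightarrow> bool" where
  "symbol k S \<longleftrightarrow> (\<forall>\<xi>. smooth_fun (\<lambda>x. S x \<xi>)) \<and> (\<forall>x. hom_poly k (S x))"

definition Lder :: "real \<Rightarrow> (real^'i::finite \<Rightarrow> real^'i) \<Rightarrow> (real^'i \<Rightarrow> real^'i \<Rightarrow> real)
    \<Rightarrow> real^'i \<Rightarrow> real^'i \<Rightarrow> real" where
  "Lder \<delta> Y S x \<xi> =
     (\<Sum>j\<in>UNIV. Y x $ j * pd j (\<lambda>y. S y \<xi>) x)
     + \<delta> * (\<Sum>j\<in>UNIV. pd j (\<lambda>y. Y y $ j) x) * S x \<xi>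
     - (\<Sum>j\<in>UNIV. \<Sum>l\<in>UNIV. pd l (\<lambda>y. Y y $ j) x * \<xi> $ j * pd l (S x) \<xi>)"

definition alpha :: "real^('n::finite idx) \<Rightarrow> 'n idx \<Rightarrow> real" where
  "alpha x l = (case l of Inl i \<Rightarrow> x $ pc i / 2
                        | Inr (Inl i) \<Rightarrow> - (x $ qc i) / 2
                        | Inr (Inr _) \<Rightarrow> - 1 / 2)"

definition Lie_form :: "(real^'i::finite \<Rightarrow> real^'i) \<Rightarrow> (real^'i \<Rightarrow> 'i \<Rightarrow> real)
    \<Rightarrow> real^'i \<Rightarrow> 'i \<Rightarrow> real" where
  "Lie_form Z a x l = (\<Sum>j\<in>UNIV. Z x $ j * pd j (\<lambda>y. a y l) x)
                      + (\<Sum>j\<in>UNIV. a x j * pd l (\<lambda>y. Z y $ j) x)"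

definition contact_vf :: "(real^('n::finite idx) \<Rightarrow> real^('n idx)) \<Rightarrow> bool" where
  "contact_vf Z \<longleftrightarrow> smooth_vf Z \<and>
     (\<exists>f. smooth_fun f \<and> (\<forall>x l. Lie_form Z alpha x l = f x * alpha x l))"

text \<open>sl(2n+2): span of constant, linear and quadratic fields eta(x) E.\<close>
definition sl_vf :: "(real^'i::finite \<Rightarrow> real^'i) \<Rightarrow> bool" where
  "sl_vf Z \<longleftrightarrow> (\<exists>(c::real^'i) (A::real^'i^'i) (\<eta>::real^'i).
      \<forall>x. Z x = c + A *v x + (\<eta> \<bullet> x) *\<^sub>R x)"

definition sp_vf :: "(real^('n::finite idx) \<Rightarrow> real^('n idx)) \<Rightarrow> bool" where
  "sp_vf Z \<longleftrightarrow> contact_vf Z \<and> sl_vf Z"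

definition Dop :: "(real^('n::finite idx) \<Rightarrow> real^('n idx) \<Rightarrow> real)
    \<Rightarrow> real^('n idx) \<Rightarrow> real^('n idx) \<Rightarrow> real" where
  "Dop S x \<xi> =
     (\<Sum>i\<in>UNIV. \<xi> $ qc i * pd (pc i) (\<lambda>y. S y \<xi>) x - \<xi> $ pc i * pd (qc i) (\<lambda>y. S y \<xi>) x)
     + \<xi> $ tc * (\<Sum>i\<in>UNIV. x $ pc i * pd (pc i) (\<lambda>y. S y \<xi>) x
                            + x $ qc i * pd (qc i) (\<lambda>y. S y \<xi>) x)
     - (\<Sum>i\<in>UNIV. x $ pc i * \<xi> $ pc i + x $ qc i * \<xi> $ qc i) * pd tc (\<lambda>y. S y \<xi>) x"

definition Xop :: "nat \<Rightarrow> real \<Rightarrow> (real^('n::finite idx) \<Rightarrow> real^('n idx) \<Rightarrow> real)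
    \<Rightarrow> real^('n idx) \<Rightarrow> real^('n idx) \<Rightarrow> real" where
  "Xop k \<delta> S x \<xi> = Dop S x \<xi> + (2 * (real CARD('n) + 1) * \<delta> - real k) * \<xi> $ tc * S x \<xi>"

text \<open>Contact vector field of a function f: X(f) for f a -1/(n+1)-density, read off by
  xi-linearity.\<close>
definition cvf :: "(real^('n::finite idx) \<Rightarrow> real) \<Rightarrow> real^('n idx) \<Rightarrow> real^('n idx)" where
  "cvf f x = (\<chi> j. Xop 0 (- 1 / (real CARD('n) + 1)) (\<lambda>y \<xi>. f y) x (axis j 1))"

end

theory Submission
  imports Defs "HOL-Computational_Algebra.Polynomial"
begin

text \<open>Every contact vector field is the field \<open>X(g)\<close> of its contact Hamiltonian
  \<open>g = \<alpha>(Z)\<close>. Write \<open>D = \<Sum>\<^sub>j Y\<^sup>j(x,\<xi>) \<partial>\<^sub>j\<close>, where \<open>Y\<close> is linear in \<open>\<xi>\<close>, affine in \<open>x\<close>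
  and orthogonal to \<open>\<xi>\<close>. A direct computation, in which all terms with at most two
  derivatives of \<open>g\<close> cancel, gives
  \<open>X(L\<^sub>Z S) - L\<^sub>Z(X S) = - \<Sum>\<^sub>l (\<Sum>\<^sub>m\<^sub>,\<^sub>r Y\<^sup>m Y\<^sup>r \<partial>\<^sub>m \<partial>\<^sub>l \<partial>\<^sub>r g) \<partial>S/\<partial>\<xi>\<^sub>l\<close>.
  For \<open>Z \<in> sp(2n+2)\<close> the Hamiltonian \<open>\<alpha>(Z)\<close> is a polynomial of degree at most 2, and
  for \<open>k = 0\<close> the symbol does not depend on \<open>\<xi>\<close>; in both cases the right-hand side
  vanishes. For \<open>g = (q\<^sup>i)\<^sup>3\<close> and \<open>S = \<xi>\<^sub>q\<^sub>i\<^sup>k\<close> it equals \<open>-6k\<close> at \<open>x = 0\<close>,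
  \<open>\<xi> = dq\<^sup>i + dp\<^sup>i\<close>.\<close>

lemma sum_idx:
  fixes f :: "'n::finite idx \<Rightarrow> 'a::comm_monoid_add"
  shows "(\<Sum>j\<in>UNIV. f j) = (\<Sum>i\<in>UNIV. f (qc i)) + (\<Sum>i\<in>UNIV. f (pc i)) + f tc"
proof -
  have "(\<Sum>j\<in>UNIV. f j) = (\<Sum>i\<in>UNIV. f (Inl i)) + (\<Sum>j\<in>(UNIV::('n + unit) set). f (Inr j))"
    by (simp flip: UNIV_Plus_UNIV add: sum.Plus)
  also have "(\<Sum>j\<in>(UNIV::('n + unit) set). f (Inr j)) = (\<Sum>i\<in>UNIV. f (Inr (Inl i))) + f tc"
    by (simp flip: UNIV_Plus_UNIV add: sum.Plus UNIV_unit tc_def)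
  finally show ?thesis by (simp add: qc_def pc_def add.assoc)
qed

lemma idx_cases:
  obtains i where "j = qc i" | i where "j = pc i" | "j = tc"
  unfolding qc_def pc_def tc_def by (metis (full_types) old.unit.exhaust sum.exhaust)

lemma idx_distinct [simp]:
  "qc i \<noteq> pc i'" "pc i \<noteq> qc i'" "qc i \<noteq> tc" "tc \<noteq> qc i" "pc i \<noteq> tc" "tc \<noteq> pc i"
  "qc i = qc i' \<longleftrightarrow> i = i'" "pc i = pc i' \<longleftrightarrow> i = i'"
  by (auto simp: qc_def pc_def tc_def)

lemma sum_if_eq_mult [simp]: "(\<Sum>r\<in>UNIV. (if r = a then c else 0) * f r) = (c::real) * f (a::'a::finite)"
  by (subst sum.remove[of UNIV a]) auto

lemma sum_mult_if_eq [simp]: "(\<Sum>r\<in>UNIV. f r * (if r = a then c else 0)) = f (a::'a::finite) * (c::real)"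
  by (subst sum.remove[of UNIV a]) auto

lemma mult_if_zero [simp]:
  "x * (if P then c else 0) = (if P then x * c else (0::real))"
  "(if P then c else 0) * x = (if P then c * x else (0::real))"
  by auto

lemma sum_mult_sum_swap:
  fixes f :: "'a \<Rightarrow> real"
  shows "(\<Sum>m\<in>A. f m * (\<Sum>j\<in>B. g m j)) = (\<Sum>j\<in>B. \<Sum>m\<in>A. f m * g m j)"
  by (simp add: sum_distrib_left) (rule sum.swap)

lemma sum_cmult_inner: "(\<Sum>m\<in>A. f m * (c * g m)) = (c::real) * (\<Sum>m\<in>A. f m * g m)"
  by (simp add: sum_distrib_left algebra_simps)

lemma antisym_sym_contraction_eq_0:
  fixes A M :: "'a::finite \<Rightarrow> 'a \<Rightarrow> real"
  assumes "\<And>m l. A m l = - A l m" "\<And>m l. M m l = M l m"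
  shows "(\<Sum>m\<in>UNIV. \<Sum>l\<in>UNIV. A m l * M m l) = 0"
proof -
  have "(\<Sum>m\<in>UNIV. \<Sum>l\<in>UNIV. A m l * M m l) = (\<Sum>l\<in>UNIV. \<Sum>m\<in>UNIV. A m l * M m l)"
    by (rule sum.swap)
  also have "\<dots> = (\<Sum>l\<in>UNIV. \<Sum>m\<in>UNIV. - (A l m * M l m))"
    by (intro sum.cong refl) (subst assms(1), subst assms(2), simp)
  also have "\<dots> = - (\<Sum>m\<in>UNIV. \<Sum>l\<in>UNIV. A m l * M m l)"
    by (simp add: sum_negf)
  finally show ?thesis by linarith
qed

definition pd_differentiable :: "'i::finite \<Rightarrow> (real^'i \<Rightarrow> real) \<Rightarrow> real^'i \<Rightarrow> bool" where
  "pd_differentiable j F x \<longleftrightarrow> (\<lambda>s. F (x + s *\<^sub>R axis j 1)) field_differentiable (at 0)"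

lemma pd_add:
  "pd_differentiable j F x \<Longrightarrow> pd_differentiable j G x \<Longrightarrow>
     pd j (\<lambda>y. F y + G y) x = pd j F x + pd j G x"
  unfolding pd_differentiable_def pd_def by simp

lemma pd_diff:
  "pd_differentiable j F x \<Longrightarrow> pd_differentiable j G x \<Longrightarrow>
     pd j (\<lambda>y. F y - G y) x = pd j F x - pd j G x"
  unfolding pd_differentiable_def pd_def by simp

lemma pd_minus: "pd_differentiable j F x \<Longrightarrow> pd j (\<lambda>y. - F y) x = - pd j F x"
  unfolding pd_differentiable_def pd_def by simp

lemma pd_mult:
  "pd_differentiable j F x \<Longrightarrow> pd_differentiable j G x \<Longrightarrow>
     pd j (\<lambda>y. F y * G y) x = pd j F x * G x + F x * pd j G x"
  unfolding pd_differentiable_def pd_def by simp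

lemma pd_cmult: "pd_differentiable j F x \<Longrightarrow> pd j (\<lambda>y. c * F y) x = c * pd j F x"
  unfolding pd_differentiable_def pd_def by simp

lemma pd_divide_const: "pd_differentiable j F x \<Longrightarrow> pd j (\<lambda>y. F y / c) x = pd j F x / c"
  unfolding pd_differentiable_def pd_def by (rule deriv_cdivide_right)

lemma pd_const [simp]: "pd j (\<lambda>y. c) x = 0"
  unfolding pd_def by simp

lemma pd_sum:
  "(\<And>i. i \<in> A \<Longrightarrow> pd_differentiable j (F i) x) \<Longrightarrow>
     pd j (\<lambda>y. \<Sum>i\<in>A. F i y) x = (\<Sum>i\<in>A. pd j (F i) x)"
  unfolding pd_differentiable_def pd_def
  by (intro DERIV_imp_deriv DERIV_sum) (simp add: DERIV_deriv_iff_field_differentiable)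

lemma pd_differentiable_add:
  "pd_differentiable j F x \<Longrightarrow> pd_differentiable j G x \<Longrightarrow> pd_differentiable j (\<lambda>y. F y + G y) x"
  unfolding pd_differentiable_def by (rule field_differentiable_add)

lemma pd_differentiable_mult:
  "pd_differentiable j F x \<Longrightarrow> pd_differentiable j G x \<Longrightarrow> pd_differentiable j (\<lambda>y. F y * G y) x"
  unfolding pd_differentiable_def by (rule field_differentiable_mult)

lemma pd_differentiable_divide:
  "pd_differentiable j F x \<Longrightarrow> pd_differentiable j (\<lambda>y. F y / c) x"
  unfolding pd_differentiable_def divide_inverse
  by (intro field_differentiable_mult field_differentiable_const)

lemma pd_differentiable_const [simp]: "pd_differentiable j (\<lambda>y. c) x"
  unfolding pd_differentiable_def by simp

lemma pd_differentiable_sum: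
  "(\<And>i. i \<in> A \<Longrightarrow> pd_differentiable j (F i) x) \<Longrightarrow> pd_differentiable j (\<lambda>y. \<Sum>i\<in>A. F i y) x"
  unfolding pd_differentiable_def by (rule field_differentiable_sum)

lemma line_coord: "(x + s *\<^sub>R axis j 1) $ i = x $ i + (if i = j then s else 0)"
  by (simp add: axis_def)

lemma pd_differentiable_coord [simp]: "pd_differentiable j (\<lambda>y. y $ i) x"
  unfolding pd_differentiable_def line_coord by (cases "i = j") (auto intro!: derivative_intros)

lemma pd_coord [simp]: "pd j (\<lambda>y. y $ i) x = (if i = j then 1 else 0)"
  unfolding pd_def line_coord by (cases "i = j") auto

lemma pd_const_fun: "pd j (\<lambda>y. c) = (\<lambda>y. 0)"
  by (simp add: fun_eq_iff)

lemma pd_coord_fun: "pd j (\<lambda>y. y $ i) = (\<lambda>y. if i = j then 1 else 0)"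
  by (simp add: fun_eq_iff)

lemma pd_pow_coord:
  fixes y :: "real^'a::finite"
  shows "pd r (\<lambda>y. (y $ a) ^ n) y = (if a = r then real n * (y $ a) ^ (n - 1) else 0)"
proof (cases "a = r")
  case True
  have "pd r (\<lambda>y. (y $ a) ^ n) y = deriv (\<lambda>s. (y $ a + s) ^ n) 0"
    unfolding pd_def line_coord using True by simp
  also have "\<dots> = real n * (y $ a) ^ (n - 1)"
    by (rule DERIV_imp_deriv) (auto intro!: derivative_eq_intros simp: Suc_diff_1 One_nat_def)
  finally show ?thesis using True by simp
next
  case False
  then show ?thesis unfolding pd_def line_coord by simp
qed

lemma has_derivative_line:
  assumes "(F has_derivative F') (at (y + s0 *\<^sub>R v))"
  shows "((\<lambda>s. F (y + s *\<^sub>R v)) has_real_derivative F' v) (at s0)"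
proof -
  have "((\<lambda>s. y + s *\<^sub>R v) has_derivative (\<lambda>h. h *\<^sub>R v)) (at s0)"
    by (auto intro!: derivative_eq_intros)
  from has_derivative_compose[OF this assms]
  have "((\<lambda>s. F (y + s *\<^sub>R v)) has_derivative (\<lambda>h. F' (h *\<^sub>R v))) (at s0)"
    by (simp add: o_def)
  moreover have "linear F'" using assms has_derivative_linear by blast
  then have "(\<lambda>h. F' (h *\<^sub>R v)) = (*) (F' v)"
    by (auto simp: fun_eq_iff linear_cmul mult.commute)
  ultimately show ?thesis
    by (simp add: has_field_derivative_def)
qed

lemma has_real_derivative_coord_line:
  assumes "F differentiable (at x)"
  shows "((\<lambda>s. F (x + s *\<^sub>R axis j 1)) has_real_derivative frechet_derivative F (at x) (axis j 1)) (at 0)"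
  using assms by (intro has_derivative_line) (simp add: frechet_derivative_works)

lemma pd_eq_frechet_derivative:
  "F differentiable (at x) \<Longrightarrow> pd j F x = frechet_derivative F (at x) (axis j 1)"
  unfolding pd_def by (rule DERIV_imp_deriv[OF has_real_derivative_coord_line])

lemma differentiable_imp_pd_differentiable:
  "F differentiable (at x) \<Longrightarrow> pd_differentiable j F x"
  unfolding pd_differentiable_def field_differentiable_def by (blast intro: has_real_derivative_coord_line)

lemma pd_has_real_derivative_line:
  assumes "F differentiable (at (y + s0 *\<^sub>R axis j 1))"
  shows "((\<lambda>s. F (y + s *\<^sub>R axis j 1)) has_real_derivative pd j F (y + s0 *\<^sub>R axis j 1)) (at s0)"
  using has_derivative_line[OF frechet_derivative_works[THEN iffD1, OF assms]]
    pd_eq_frechet_derivative[OF assms] by simp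

lemma smooth_fun_iff:
  "smooth_fun F \<longleftrightarrow> (\<forall>x. F differentiable (at x)) \<and> (\<forall>j. smooth_fun (pd j F))"
proof -
  have snoc: "iter_pd (js @ [j]) F = iter_pd js (pd j F)" for js j
    by (simp add: iter_pd_def)
  have "(\<forall>js x. iter_pd js F differentiable (at x)) \<longleftrightarrow>
      (\<forall>x. iter_pd [] F differentiable (at x)) \<and> (\<forall>j js x. iter_pd (js @ [j]) F differentiable (at x))"
    by (metis append_Nil rev_exhaust)
  then show ?thesis
    unfolding smooth_fun_def snoc by (simp add: iter_pd_def)
qed

lemma smooth_imp_differentiable: "smooth_fun F \<Longrightarrow> F differentiable (at x)"
  using smooth_fun_iff by blast

lemma smooth_pd: "smooth_fun F \<Longrightarrow> smooth_fun (pd j F)"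
  using smooth_fun_iff by blast

lemma smooth_imp_pd_differentiable: "smooth_fun F \<Longrightarrow> pd_differentiable j F x"
  by (intro differentiable_imp_pd_differentiable smooth_imp_differentiable)

lemma smooth_funI_invariant:
  assumes "P F"
    and "\<And>G x. P G \<Longrightarrow> G differentiable (at x)"
    and "\<And>G j. P G \<Longrightarrow> P (pd j G)"
  shows "smooth_fun F"
proof -
  have "P (iter_pd js G)" if "P G" for js G
    using that by (induction js) (auto simp: iter_pd_def assms(3))
  then show ?thesis unfolding smooth_fun_def using assms(1,2) by blast
qed

inductive smooth_algebra :: "(real^'i::finite \<Rightarrow> real) \<Rightarrow> bool" where
  smooth_algebra_base: "smooth_fun F \<Longrightarrow> smooth_algebra F"
| smooth_algebra_add: "smooth_algebra F \<Longrightarrow> smooth_algebra G \<Longrightarrow> smooth_algebra (\<lambda>x. F x + G x)"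
| smooth_algebra_mult: "smooth_algebra F \<Longrightarrow> smooth_algebra G \<Longrightarrow> smooth_algebra (\<lambda>x. F x * G x)"

lemma smooth_algebra_differentiable: "smooth_algebra F \<Longrightarrow> F differentiable (at x)"
proof (induction rule: smooth_algebra.induct)
  case (smooth_algebra_base F)
  then show ?case by (rule smooth_imp_differentiable)
qed (auto intro: differentiable_add differentiable_mult)

lemma smooth_algebra_pd_differentiable: "smooth_algebra F \<Longrightarrow> pd_differentiable j F x"
  by (intro differentiable_imp_pd_differentiable smooth_algebra_differentiable)

lemma smooth_algebra_pd: "smooth_algebra F \<Longrightarrow> smooth_algebra (pd j F)"
proof (induction rule: smooth_algebra.induct)
  case (smooth_algebra_base F)
  then show ?case by (simp add: smooth_algebra.smooth_algebra_base smooth_pd)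
next
  case (smooth_algebra_add F G)
  have "pd j (\<lambda>x. F x + G x) = (\<lambda>x. pd j F x + pd j G x)"
    using smooth_algebra_add.hyps by (simp add: fun_eq_iff pd_add smooth_algebra_pd_differentiable)
  then show ?case using smooth_algebra_add.IH by (simp add: smooth_algebra.smooth_algebra_add)
next
  case (smooth_algebra_mult F G)
  have "pd j (\<lambda>x. F x * G x) = (\<lambda>x. pd j F x * G x + F x * pd j G x)"
    using smooth_algebra_mult.hyps by (simp add: fun_eq_iff pd_mult smooth_algebra_pd_differentiable)
  then show ?case using smooth_algebra_mult by (simp add: smooth_algebra.intros)
qed

lemma smooth_algebra_imp_smooth: "smooth_algebra F \<Longrightarrow> smooth_fun F"
  by (rule smooth_funI_invariant[of smooth_algebra])
    (auto intro: smooth_algebra_differentiable smooth_algebra_pd)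

lemma smooth_add [intro]: "smooth_fun F \<Longrightarrow> smooth_fun G \<Longrightarrow> smooth_fun (\<lambda>x. F x + G x)"
  by (metis smooth_algebra.intros(1,2) smooth_algebra_imp_smooth)

lemma smooth_mult [intro]: "smooth_fun F \<Longrightarrow> smooth_fun G \<Longrightarrow> smooth_fun (\<lambda>x. F x * G x)"
  by (metis smooth_algebra.intros(1,3) smooth_algebra_imp_smooth)

lemma smooth_const [intro, simp]: "smooth_fun (\<lambda>x. c)"
  by (rule smooth_funI_invariant[of "\<lambda>F. \<exists>c. F = (\<lambda>x. c)"]) (auto simp: pd_const_fun)

lemma smooth_coord [intro, simp]: "smooth_fun (\<lambda>x. x $ i)"
proof (rule smooth_funI_invariant[of "\<lambda>F. (\<exists>c. F = (\<lambda>x. c)) \<or> (\<exists>i. F = (\<lambda>x. x $ i))"])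
  fix G :: "real^'a \<Rightarrow> real" and j
  assume "(\<exists>c. G = (\<lambda>x. c)) \<or> (\<exists>i. G = (\<lambda>x. x $ i))"
  then show "(\<exists>c. pd j G = (\<lambda>x. c)) \<or> (\<exists>i. pd j G = (\<lambda>x. x $ i))"
    by (auto simp: pd_const_fun pd_coord_fun)
next
  fix G :: "real^'a \<Rightarrow> real" and x
  assume "(\<exists>c. G = (\<lambda>x. c)) \<or> (\<exists>i. G = (\<lambda>x. x $ i))"
  then show "G differentiable (at x)"
    by (elim disjE exE) (auto intro: bounded_linear_imp_differentiable bounded_linear_vec_nth)
qed auto

lemma smooth_cmult [intro]: "smooth_fun F \<Longrightarrow> smooth_fun (\<lambda>x. c * F x)"
  by (intro smooth_mult smooth_const)

lemma smooth_minus [intro]: "smooth_fun F \<Longrightarrow> smooth_fun (\<lambda>x. - F x)"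
  using smooth_cmult[of F "-1"] by simp

lemma smooth_diff [intro]: "smooth_fun F \<Longrightarrow> smooth_fun G \<Longrightarrow> smooth_fun (\<lambda>x. F x - G x)"
  using smooth_add[of F "\<lambda>x. - G x"] by (simp add: smooth_minus)

lemma smooth_sum [intro]:
  "(\<And>i. i \<in> A \<Longrightarrow> smooth_fun (F i)) \<Longrightarrow> smooth_fun (\<lambda>x. \<Sum>i\<in>A. F i x)"
proof (induction A rule: infinite_finite_induct)
  case (insert a A)
  then show ?case by (simp add: smooth_add)
qed simp_all

lemma smooth_pow [intro]: "smooth_fun F \<Longrightarrow> smooth_fun (\<lambda>x. F x ^ m)"
  by (induction m) (simp_all add: smooth_mult)

lemma pd_add_smooth: "smooth_fun F \<Longrightarrow> smooth_fun G \<Longrightarrow> pd m (\<lambda>y. F y + G y) x = pd m F x + pd m G x"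
  by (intro pd_add smooth_imp_pd_differentiable)

lemma pd_diff_smooth: "smooth_fun F \<Longrightarrow> smooth_fun G \<Longrightarrow> pd m (\<lambda>y. F y - G y) x = pd m F x - pd m G x"
  by (intro pd_diff smooth_imp_pd_differentiable)

lemma pd_mult_smooth:
  "smooth_fun F \<Longrightarrow> smooth_fun G \<Longrightarrow> pd m (\<lambda>y. F y * G y) x = pd m F x * G x + F x * pd m G x"
  by (intro pd_mult smooth_imp_pd_differentiable)

lemma pd_sum_smooth: "(\<And>i. smooth_fun (F i)) \<Longrightarrow> pd m (\<lambda>y. \<Sum>i\<in>A. F i y) x = (\<Sum>i\<in>A. pd m (F i) x)"
  by (intro pd_sum smooth_imp_pd_differentiable)

section \<open>Symmetry of second partial derivatives\<close>

lemma mvt_pd: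
  assumes "\<And>z. G differentiable (at z)" and "h > 0"
  shows "\<exists>a. 0 < a \<and> a < h \<and> G (y + h *\<^sub>R axis j 1) - G y = h * pd j G (y + a *\<^sub>R axis j 1)"
proof -
  have "\<And>s. 0 \<le> s \<Longrightarrow> s \<le> h \<Longrightarrow> ((\<lambda>s. G (y + s *\<^sub>R axis j 1)) has_real_derivative pd j G (y + s *\<^sub>R axis j 1)) (at s)"
    using assms(1) by (auto intro!: pd_has_real_derivative_line)
  from MVT2[OF assms(2) this] obtain a where "0 < a" "a < h"
    "G (y + h *\<^sub>R axis j 1) - G (y + 0 *\<^sub>R axis j 1) = (h - 0) * pd j G (y + a *\<^sub>R axis j 1)"
    by blast
  then show ?thesis by auto
qed

lemma second_difference_mvt:
  assumes F: "smooth_fun F" and h: "h > 0"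
  shows "\<exists>a b. 0 < a \<and> a < h \<and> 0 < b \<and> b < h \<and>
    F (x + h *\<^sub>R axis i 1 + h *\<^sub>R axis j 1) - F (x + h *\<^sub>R axis i 1) - F (x + h *\<^sub>R axis j 1) + F x
      = h * h * pd j (pd i F) (x + a *\<^sub>R axis i 1 + b *\<^sub>R axis j 1)"
proof -
  define u where "u = (axis i 1 :: real^'a)"
  define v where "v = (axis j 1 :: real^'a)"
  define \<psi> where "\<psi> s = F (x + h *\<^sub>R v + s *\<^sub>R u) - F (x + s *\<^sub>R u)" for s
  have dF: "\<And>z. F differentiable (at z)" using F smooth_imp_differentiable by blast
  have "\<And>s. 0 \<le> s \<Longrightarrow> s \<le> h \<Longrightarrow> (\<psi> has_real_derivative
      (pd i F (x + h *\<^sub>R v + s *\<^sub>R u) - pd i F (x + s *\<^sub>R u))) (at s)"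
    unfolding \<psi>_def u_def using dF by (auto intro!: derivative_eq_intros pd_has_real_derivative_line)
  from MVT2[OF h this] obtain a where a: "0 < a" "a < h"
    "\<psi> h - \<psi> 0 = (h - 0) * (pd i F (x + h *\<^sub>R v + a *\<^sub>R u) - pd i F (x + a *\<^sub>R u))"
    by blast
  have dG: "\<And>z. pd i F differentiable (at z)" using F smooth_imp_differentiable smooth_pd by blast
  obtain b where b: "0 < b" "b < h"
    "pd i F (x + a *\<^sub>R u + h *\<^sub>R v) - pd i F (x + a *\<^sub>R u) = h * pd j (pd i F) (x + a *\<^sub>R u + b *\<^sub>R v)"
    using mvt_pd[OF dG h, of "x + a *\<^sub>R u" j] unfolding v_def by blast
  have "F (x + h *\<^sub>R u + h *\<^sub>R v) - F (x + h *\<^sub>R u) - F (x + h *\<^sub>R v) + F x = \<psi> h - \<psi> 0"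
    unfolding \<psi>_def by (simp add: algebra_simps)
  also have "\<dots> = h * h * pd j (pd i F) (x + a *\<^sub>R u + b *\<^sub>R v)"
    using a(3) b(3) by (simp add: algebra_simps)
  finally show ?thesis using a b unfolding u_def v_def by blast
qed

lemma dist_two_steps_less:
  fixes x :: "real^'a::finite"
  assumes "0 < s" "s < h" "0 < t" "t < h"
  shows "dist (x + s *\<^sub>R axis i 1 + t *\<^sub>R axis j 1) x < 2 * h"
proof -
  have "dist (x + s *\<^sub>R axis i 1 + t *\<^sub>R axis j 1) x = norm (s *\<^sub>R axis i 1 + t *\<^sub>R (axis j 1 :: real^'a))"
    by (simp add: dist_norm)
  also have "\<dots> \<le> norm (s *\<^sub>R (axis i 1 :: real^'a)) + norm (t *\<^sub>R (axis j 1 :: real^'a))"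
    by (rule norm_triangle_ineq)
  also have "\<dots> = s + t" using assms by simp
  finally show ?thesis using assms by simp
qed

lemma pd_commute:
  assumes F: "smooth_fun F"
  shows "pd i (pd j F) x = pd j (pd i F) x"
proof (rule ccontr)
  define A where "A = pd j (pd i F)"
  define B where "B = pd i (pd j F)"
  assume "pd i (pd j F) x \<noteq> pd j (pd i F) x"
  then have e: "\<bar>A x - B x\<bar> / 2 > 0" unfolding A_def B_def by auto
  have "continuous (at x) A" "continuous (at x) B"
    unfolding A_def B_def by (intro differentiable_imp_continuous_within smooth_imp_differentiable smooth_pd F)+
  then obtain d1 d2 where d1: "d1 > 0" "\<And>y. dist y x < d1 \<Longrightarrow> dist (A y) (A x) < \<bar>A x - B x\<bar> / 2"
    and d2: "d2 > 0" "\<And>y. dist y x < d2 \<Longrightarrow> dist (B y) (B x) < \<bar>A x - B x\<bar> / 2"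
    using e unfolding continuous_at_eps_delta by blast
  define h where "h = min d1 d2 / 2"
  have h: "h > 0" using d1 d2 unfolding h_def by auto
  obtain a b where ab: "0 < a" "a < h" "0 < b" "b < h"
    "F (x + h *\<^sub>R axis i 1 + h *\<^sub>R axis j 1) - F (x + h *\<^sub>R axis i 1) - F (x + h *\<^sub>R axis j 1) + F x
      = h * h * A (x + a *\<^sub>R axis i 1 + b *\<^sub>R axis j 1)"
    using second_difference_mvt[OF F h, of x i j] unfolding A_def by blast
  obtain a' b' where ab': "0 < a'" "a' < h" "0 < b'" "b' < h"
    "F (x + h *\<^sub>R axis j 1 + h *\<^sub>R axis i 1) - F (x + h *\<^sub>R axis j 1) - F (x + h *\<^sub>R axis i 1) + F x
      = h * h * B (x + a' *\<^sub>R axis j 1 + b' *\<^sub>R axis i 1)"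
    using second_difference_mvt[OF F h, of x j i] unfolding B_def by blast
  have "h * h * A (x + a *\<^sub>R axis i 1 + b *\<^sub>R axis j 1) = h * h * B (x + a' *\<^sub>R axis j 1 + b' *\<^sub>R axis i 1)"
    using ab(5) ab'(5) by (simp add: algebra_simps)
  then have "A (x + a *\<^sub>R axis i 1 + b *\<^sub>R axis j 1) = B (x + a' *\<^sub>R axis j 1 + b' *\<^sub>R axis i 1)"
    using h by simp
  moreover have "dist (A (x + a *\<^sub>R axis i 1 + b *\<^sub>R axis j 1)) (A x) < \<bar>A x - B x\<bar> / 2"
    using d1(2) dist_two_steps_less[OF ab(1-4), of x i j] unfolding h_def by auto
  moreover have "dist (B (x + a' *\<^sub>R axis j 1 + b' *\<^sub>R axis i 1)) (B x) < \<bar>A x - B x\<bar> / 2"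
    using d2(2) dist_two_steps_less[OF ab'(1-4), of x j i] unfolding h_def by auto
  ultimately have "\<bar>A x - B x\<bar> < 2 * (\<bar>A x - B x\<bar> / 2)"
    unfolding dist_real_def by linarith
  then show False by simp
qed

section \<open>Homogeneous polynomials\<close>

lemma hom_poly_line:
  "hom_poly k f \<Longrightarrow> \<exists>p. degree p \<le> k \<and> (\<forall>s. f (\<xi> + s *\<^sub>R v) = poly p s)"
proof (induction k arbitrary: f)
  case 0
  then obtain c where "f = (\<lambda>\<xi>. c)" by auto
  then show ?case by (intro exI[of _ "[:c:]"]) auto
next
  case (Suc k)
  then obtain g where g: "\<forall>j. hom_poly k (g j)" "f = (\<lambda>\<xi>. \<Sum>j\<in>UNIV. \<xi> $ j * g j \<xi>)" by auto
  have "\<forall>j. \<exists>p. degree p \<le> k \<and> (\<forall>s. g j (\<xi> + s *\<^sub>R v) = poly p s)"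
    using Suc.IH g(1) by blast
  then obtain P where "\<forall>j. degree (P j) \<le> k \<and> (\<forall>s. g j (\<xi> + s *\<^sub>R v) = poly (P j) s)"
    using choice[of "\<lambda>j p. degree p \<le> k \<and> (\<forall>s. g j (\<xi> + s *\<^sub>R v) = poly p s)"] by blast
  then have P: "\<And>j. degree (P j) \<le> k" "\<And>j s. g j (\<xi> + s *\<^sub>R v) = poly (P j) s"
    by auto
  define q where "q = (\<Sum>j\<in>UNIV. [:\<xi> $ j, v $ j:] * P j)"
  have "degree q \<le> Suc k"
    unfolding q_def
  proof (rule degree_sum_le)
    fix j
    have "degree ([:\<xi> $ j, v $ j:] * P j) \<le> degree [:\<xi> $ j, v $ j:] + degree (P j)"
      by (rule degree_mult_le)
    also have "\<dots> \<le> 1 + k" using P(1)[of j] by (simp add: degree_pCons_le)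
    finally show "degree ([:\<xi> $ j, v $ j:] * P j) \<le> Suc k" by simp
  qed simp
  moreover have "f (\<xi> + s *\<^sub>R v) = poly q s" for s
    unfolding g(2) q_def poly_sum using P(2) by (simp add: algebra_simps)
  ultimately show ?case by blast
qed

text \<open>A symbol is a polynomial of degree at most \<open>k\<close> on every line in \<open>\<xi>\<close>, so by Lagrange
  interpolation at the nodes \<open>0, \<dots>, k\<close> its \<open>\<xi>\<close>-derivatives are fixed linear combinations of
  its values. This transfers smoothness in \<open>x\<close> to \<open>\<partial>S/\<partial>\<xi>\<close> and lets \<open>x\<close>- and
  \<open>\<xi>\<close>-derivatives commute.\<close>

definition lagrange_basis :: "nat \<Rightarrow> nat \<Rightarrow> real poly" where
  "lagrange_basis k m = (\<Prod>i\<in>{0..k}-{m}. smult (1 / (real m - real i)) [:- real i, 1:])"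

lemma degree_lagrange_basis: "m \<le> k \<Longrightarrow> degree (lagrange_basis k m) \<le> k"
proof -
  assume m: "m \<le> k"
  have "degree (lagrange_basis k m)
      \<le> sum (degree \<circ> (\<lambda>i. smult (1 / (real m - real i)) [:- real i, 1:])) ({0..k}-{m})"
    unfolding lagrange_basis_def by (rule degree_prod_sum_le) simp
  also have "\<dots> \<le> sum (\<lambda>i. 1) ({0..k}-{m})"
    by (rule sum_mono) (auto intro: order.trans[OF degree_smult_le])
  also have "\<dots> = k" using m by simp
  finally show ?thesis .
qed

lemma poly_lagrange_basis_node:
  assumes "m \<le> k" "j \<le> k"
  shows "poly (lagrange_basis k m) (real j) = (if j = m then 1 else 0)"
proof (cases "j = m")
  case True
  have "poly (smult (1 / (real m - real i)) [:- real i, 1:]) (real m) = 1" if "i \<in> {0..k}-{m}" for i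
  proof -
    have "real m - real i \<noteq> 0" using that by auto
    then show ?thesis by (simp add: diff_divide_distrib[symmetric])
  qed
  then have "(\<Prod>i\<in>{0..k}-{m}. poly (smult (1 / (real m - real i)) [:- real i, 1:]) (real m)) = 1"
    by (intro prod.neutral ballI)
  then show ?thesis unfolding lagrange_basis_def poly_prod True by (simp only: if_P[OF refl])
next
  case False
  have j: "j \<in> {0..k}-{m}" using assms False by auto
  have "poly (smult (1 / (real m - real j)) [:- real j, 1:]) (real j) = 0" by simp
  then have "(\<Prod>i\<in>{0..k}-{m}. poly (smult (1 / (real m - real i)) [:- real i, 1:]) (real j)) = 0"
    using j by (intro prod_zero) auto
  then show ?thesis unfolding lagrange_basis_def poly_prod using False by simp
qed

lemma poly_lagrange_interpolation:
  fixes p :: "real poly"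
  assumes "degree p \<le> k"
  shows "poly p s = (\<Sum>m\<le>k. poly p (real m) * poly (lagrange_basis k m) s)"
proof -
  define q where "q = (\<Sum>m\<le>k. smult (poly p (real m)) (lagrange_basis k m))"
  have "p = q"
  proof (rule poly_eqI_degree[of "real ` {..k}"])
    show "poly p x = poly q x" if "x \<in> real ` {..k}" for x
    proof -
      from that obtain j where j: "j \<le> k" "x = real j" by auto
      have "poly q x = (\<Sum>m\<le>k. if m = j then poly p (real j) else 0)"
        unfolding q_def poly_sum j(2) by (intro sum.cong) (auto simp: poly_lagrange_basis_node j(1))
      then show ?thesis using j by simp
    qed
    show "degree p < card (real ` {..k})"
      using assms by (simp add: card_image)
    have "degree q \<le> k"
      unfolding q_def
      by (intro degree_sum_le) (auto intro: order.trans[OF degree_smult_le] degree_lagrange_basis)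
    then show "degree q < card (real ` {..k})"
      by (simp add: card_image)
  qed
  then have "poly p s = poly q s" by simp
  also have "\<dots> = (\<Sum>m\<le>k. poly p (real m) * poly (lagrange_basis k m) s)"
    unfolding q_def poly_sum by simp
  finally show ?thesis .
qed

definition lagrange_deriv :: "nat \<Rightarrow> nat \<Rightarrow> real" where
  "lagrange_deriv k m = deriv (poly (lagrange_basis k m)) 0"

lemma poly_field_differentiable [simp]: "poly p field_differentiable (at x)"
  by (simp add: field_differentiable_def) (meson poly_DERIV)

lemma poly_mult_const_field_differentiable [simp]: "(\<lambda>s. poly p s * c) field_differentiable (at x)"
  by (intro field_differentiable_mult poly_field_differentiable field_differentiable_const)

lemma deriv_lagrange_sum:
  "deriv (\<lambda>s. \<Sum>m\<le>k. poly (lagrange_basis k m) s * c m) 0 = (\<Sum>m\<le>k. lagrange_deriv k m * c m)"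
proof -
  have "deriv (\<lambda>s. \<Sum>m\<le>k. poly (lagrange_basis k m) s * c m) 0
      = (\<Sum>m\<le>k. deriv (\<lambda>s. poly (lagrange_basis k m) s * c m) 0)"
    by (rule deriv_sum) simp
  also have "\<dots> = (\<Sum>m\<le>k. lagrange_deriv k m * c m)"
    by (rule sum.cong) (simp_all add: lagrange_deriv_def deriv_cmult_right)
  finally show ?thesis .
qed

lemma hom_poly_line_interpolation:
  assumes "hom_poly k f"
  shows "f (\<xi> + s *\<^sub>R v) = (\<Sum>m\<le>k. poly (lagrange_basis k m) s * f (\<xi> + real m *\<^sub>R v))"
proof -
  obtain p where p: "degree p \<le> k" "\<And>s. f (\<xi> + s *\<^sub>R v) = poly p s"
    using hom_poly_line[OF assms] by blast
  show ?thesis unfolding p(2) by (subst poly_lagrange_interpolation[OF p(1)]) (simp add: mult.commute)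
qed

lemma hom_poly_pd_differentiable:
  assumes "hom_poly k f"
  shows "pd_differentiable l f \<xi>"
proof -
  obtain p where "\<And>s. f (\<xi> + s *\<^sub>R axis l 1) = poly p s"
    using hom_poly_line[OF assms] by blast
  then have "(\<lambda>s. f (\<xi> + s *\<^sub>R axis l 1)) = poly p" by (rule ext)
  then show ?thesis unfolding pd_differentiable_def by simp
qed

lemma pd_hom_poly_lagrange:
  assumes h: "hom_poly k f"
  shows "pd l f \<xi> = (\<Sum>m\<le>k. lagrange_deriv k m * f (\<xi> + real m *\<^sub>R axis l 1))"
proof -
  have "pd l f \<xi> = deriv (\<lambda>s. \<Sum>m\<le>k. poly (lagrange_basis k m) s * f (\<xi> + real m *\<^sub>R axis l 1)) 0"
    unfolding pd_def by (subst hom_poly_line_interpolation[OF h]) (rule refl)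
  also have "\<dots> = (\<Sum>m\<le>k. lagrange_deriv k m * f (\<xi> + real m *\<^sub>R axis l 1))"
    by (rule deriv_lagrange_sum)
  finally show ?thesis .
qed

lemma smooth_fibre_pd:
  assumes H: "\<And>y. hom_poly k (S y)" and Sm: "\<And>\<eta>. smooth_fun (\<lambda>y. S y \<eta>)"
  shows "smooth_fun (\<lambda>y. pd l (S y) \<xi>)"
  unfolding pd_hom_poly_lagrange[OF H] by (intro smooth_sum smooth_cmult Sm)

lemma pd_fibre_pd:
  assumes H: "\<And>y. hom_poly k (S y)" and Sm: "\<And>\<eta>. smooth_fun (\<lambda>y. S y \<eta>)"
  shows "pd j (\<lambda>y. pd l (S y) \<xi>) x = (\<Sum>m\<le>k. lagrange_deriv k m * pd j (\<lambda>y. S y (\<xi> + real m *\<^sub>R axis l 1)) x)"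
  unfolding pd_hom_poly_lagrange[OF H]
  by (subst pd_sum) (auto intro!: pd_differentiable_mult smooth_imp_pd_differentiable Sm sum.cong
      simp: pd_cmult[OF smooth_imp_pd_differentiable[OF Sm]])

lemma pd_symbol_line:
  assumes H: "\<And>y. hom_poly k (S y)" and Sm: "\<And>\<eta>. smooth_fun (\<lambda>y. S y \<eta>)"
  shows "(\<lambda>s. pd j (\<lambda>y. S y (\<xi> + s *\<^sub>R axis l 1)) x)
     = (\<lambda>s. \<Sum>m\<le>k. poly (lagrange_basis k m) s * pd j (\<lambda>y. S y (\<xi> + real m *\<^sub>R axis l 1)) x)"
  by (subst hom_poly_line_interpolation[OF H], subst pd_sum)
    (auto intro!: pd_differentiable_mult smooth_imp_pd_differentiable Sm sum.cong
      simp: pd_cmult[OF smooth_imp_pd_differentiable[OF Sm]])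

lemma pd_differentiable_fibre:
  assumes H: "\<And>y. hom_poly k (S y)" and Sm: "\<And>\<eta>. smooth_fun (\<lambda>y. S y \<eta>)"
  shows "pd_differentiable l (\<lambda>\<eta>. pd j (\<lambda>y. S y \<eta>) x) \<xi>"
  unfolding pd_differentiable_def
  by (subst pd_symbol_line[OF H Sm]) (intro field_differentiable_sum poly_mult_const_field_differentiable)

lemma pd_fibre_base_commute:
  assumes H: "\<And>y. hom_poly k (S y)" and Sm: "\<And>\<eta>. smooth_fun (\<lambda>y. S y \<eta>)"
  shows "pd l (\<lambda>\<eta>. pd j (\<lambda>y. S y \<eta>) x) \<xi> = pd j (\<lambda>y. pd l (S y) \<xi>) x"
proof -
  have "pd l (\<lambda>\<eta>. pd j (\<lambda>y. S y \<eta>) x) \<xi>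
      = deriv (\<lambda>s. pd j (\<lambda>y. S y (\<xi> + s *\<^sub>R axis l 1)) x) 0"
    by (rule pd_def)
  also have "\<dots> = deriv (\<lambda>s. \<Sum>m\<le>k. poly (lagrange_basis k m) s * pd j (\<lambda>y. S y (\<xi> + real m *\<^sub>R axis l 1)) x) 0"
    by (subst pd_symbol_line[OF H Sm]) (rule refl)
  also have "\<dots> = (\<Sum>m\<le>k. lagrange_deriv k m * pd j (\<lambda>y. S y (\<xi> + real m *\<^sub>R axis l 1)) x)"
    by (rule deriv_lagrange_sum)
  finally show ?thesis using pd_fibre_pd[OF H Sm] by simp
qed

lemma hom_poly_euler: "hom_poly k f \<Longrightarrow> (\<Sum>l\<in>UNIV. \<xi> $ l * pd l f \<xi>) = real k * f \<xi>"
proof (induction k arbitrary: f)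
  case 0
  then obtain c where "f = (\<lambda>\<xi>. c)" by auto
  then show ?case by simp
next
  case (Suc k)
  then obtain g where g: "\<And>j. hom_poly k (g j)" "f = (\<lambda>\<xi>. \<Sum>j\<in>UNIV. \<xi> $ j * g j \<xi>)" by auto
  have pdf: "pd l f \<xi> = g l \<xi> + (\<Sum>j\<in>UNIV. \<xi> $ j * pd l (g j) \<xi>)" for l
  proof -
    have "pd l f \<xi> = (\<Sum>j\<in>UNIV. pd l (\<lambda>\<eta>. \<eta> $ j * g j \<eta>) \<xi>)"
      unfolding g(2) by (rule pd_sum) (auto intro!: pd_differentiable_mult hom_poly_pd_differentiable[OF g(1)])
    also have "\<dots> = (\<Sum>j\<in>UNIV. (if j = l then g j \<xi> else 0) + \<xi> $ j * pd l (g j) \<xi>)"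
      by (rule sum.cong) (auto simp: pd_mult hom_poly_pd_differentiable[OF g(1)])
    finally show ?thesis by (simp add: sum.distrib)
  qed
  have s1: "(\<Sum>l\<in>UNIV. \<xi> $ l * pd l f \<xi>)
      = (\<Sum>l\<in>UNIV. \<xi> $ l * g l \<xi>) + (\<Sum>l\<in>UNIV. \<Sum>j\<in>UNIV. \<xi> $ l * (\<xi> $ j * pd l (g j) \<xi>))"
    unfolding pdf by (simp only: distrib_left sum.distrib sum_distrib_left)
  have s2: "(\<Sum>l\<in>UNIV. \<Sum>j\<in>UNIV. \<xi> $ l * (\<xi> $ j * pd l (g j) \<xi>))
      = (\<Sum>j\<in>UNIV. \<Sum>l\<in>UNIV. \<xi> $ l * (\<xi> $ j * pd l (g j) \<xi>))"
    by (rule sum.swap)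
  have s3: "(\<Sum>j\<in>UNIV. \<Sum>l\<in>UNIV. \<xi> $ l * (\<xi> $ j * pd l (g j) \<xi>))
      = (\<Sum>j\<in>UNIV. \<xi> $ j * (\<Sum>l\<in>UNIV. \<xi> $ l * pd l (g j) \<xi>))"
    by (simp only: sum_distrib_left mult.left_commute)
  have s4: "(\<Sum>j\<in>UNIV. \<xi> $ j * (\<Sum>l\<in>UNIV. \<xi> $ l * pd l (g j) \<xi>)) = (\<Sum>j\<in>UNIV. \<xi> $ j * (real k * g j \<xi>))"
    by (simp only: Suc.IH[OF g(1)])
  have s5: "(\<Sum>l\<in>UNIV. \<xi> $ l * g l \<xi>) + (\<Sum>j\<in>UNIV. \<xi> $ j * (real k * g j \<xi>)) = real (Suc k) * f \<xi>"
    unfolding g(2) by (simp add: algebra_simps sum.distrib sum_distrib_left)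
  show ?case by (simp only: s1 s2 s3 s4 s5)
qed

lemma hom_poly_zero: "hom_poly k (\<lambda>\<xi>. 0)"
proof (induction k)
  case (Suc k)
  then show ?case by (auto intro!: exI[of _ "\<lambda>j \<xi>. 0"])
next
  case 0 show ?case by (simp only: hom_poly.simps, rule exI[of _ 0], rule refl)
qed

lemma hom_poly_pow: fixes a :: "'a::finite" shows "hom_poly k (\<lambda>\<xi>::real^'a. (\<xi> $ a) ^ k)"
proof (induction k)
  case (Suc k)
  have "(\<lambda>\<xi>::real^'a. (\<xi> $ a) ^ Suc k) = (\<lambda>\<xi>. \<Sum>j\<in>UNIV. \<xi> $ j * (if j = a then (\<xi> $ a) ^ k else 0))"
    by (rule ext) (simp only: sum_mult_if_eq power_Suc)
  moreover have "\<forall>j. hom_poly k (\<lambda>\<xi>::real^'a. if j = a then (\<xi> $ a) ^ k else 0)"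
  proof
    fix j show "hom_poly k (\<lambda>\<xi>::real^'a. if j = a then (\<xi> $ a) ^ k else 0)"
      by (cases "j = a") (simp_all add: Suc.IH hom_poly_zero)
  qed
  ultimately show ?case by (auto intro!: exI[of _ "\<lambda>j \<xi>. if j = a then (\<xi> $ a) ^ k else 0"])
next
  case 0 show ?case by (simp only: hom_poly.simps power_0, rule exI[of _ 1], rule refl)
qed

section \<open>The operator \<open>D\<close> in coordinates\<close>

definition idx_case :: "('n \<Rightarrow> 'a) \<Rightarrow> ('n \<Rightarrow> 'a) \<Rightarrow> 'a \<Rightarrow> 'n idx \<Rightarrow> 'a" where
  "idx_case f g c j = (case j of Inl i \<Rightarrow> f i | Inr (Inl i) \<Rightarrow> g i | Inr (Inr _) \<Rightarrow> c)"

lemma idx_case_simps [simp]: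
  "idx_case f g c (qc i) = f i" "idx_case f g c (pc i) = g i" "idx_case f g c tc = c"
  by (simp_all add: idx_case_def qc_def pc_def tc_def)

text \<open>\<open>Dmat0\<close> and \<open>Dmat1\<close> are the constant and linear parts of the matrix \<open>Dmat\<close> with
  \<open>D = \<Sum>\<^sub>j\<^sub>,\<^sub>l Dmat j l x \<xi>\<^sub>l \<partial>\<^sub>j\<close>.\<close>

definition Dmat0 :: "'n::finite idx \<Rightarrow> 'n idx \<Rightarrow> real" where
  "Dmat0 j l = idx_case (\<lambda>i. idx_case (\<lambda>_. 0) (\<lambda>i'. if i = i' then -1 else 0) 0 l)
                  (\<lambda>i. idx_case (\<lambda>i'. if i = i' then 1 else 0) (\<lambda>_. 0) 0 l) 0 j"

definition Dmat1 :: "'n::finite idx \<Rightarrow> 'n idx \<Rightarrow> 'n idx \<Rightarrow> real" where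
  "Dmat1 j l r = idx_case (\<lambda>i. idx_case (\<lambda>_. 0) (\<lambda>_. 0) (if r = qc i then 1 else 0) l)
                   (\<lambda>i. idx_case (\<lambda>_. 0) (\<lambda>_. 0) (if r = pc i then 1 else 0) l)
                   (idx_case (\<lambda>i'. if r = qc i' then -1 else 0) (\<lambda>i'. if r = pc i' then -1 else 0) 0 l) j"

lemma Dmat0_simps [simp]:
  "Dmat0 (qc i) (qc i') = 0" "Dmat0 (qc i) (pc i') = (if i = i' then -1 else 0)" "Dmat0 (qc i) tc = 0"
  "Dmat0 (pc i) (qc i') = (if i = i' then 1 else 0)" "Dmat0 (pc i) (pc i') = 0" "Dmat0 (pc i) tc = 0"
  "Dmat0 tc l = 0"
  by (simp_all add: Dmat0_def)

lemma Dmat1_simps [simp]: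
  "Dmat1 (qc i) (qc i') r = 0" "Dmat1 (qc i) (pc i') r = 0" "Dmat1 (qc i) tc r = (if r = qc i then 1 else 0)"
  "Dmat1 (pc i) (qc i') r = 0" "Dmat1 (pc i) (pc i') r = 0" "Dmat1 (pc i) tc r = (if r = pc i then 1 else 0)"
  "Dmat1 tc (qc i') r = (if r = qc i' then -1 else 0)" "Dmat1 tc (pc i') r = (if r = pc i' then -1 else 0)"
  "Dmat1 tc tc r = 0"
  by (simp_all add: Dmat1_def)

definition Dmat :: "'n::finite idx \<Rightarrow> 'n idx \<Rightarrow> real^('n idx) \<Rightarrow> real" where
  "Dmat j l x = Dmat0 j l + (\<Sum>r\<in>UNIV. Dmat1 j l r * x $ r)"

definition Dsymb :: "real^('n::finite idx) \<Rightarrow> real^('n idx) \<Rightarrow> 'n idx \<Rightarrow> real" where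
  "Dsymb x \<xi> j = (\<Sum>l\<in>UNIV. Dmat j l x * \<xi> $ l)"

lemma Dmat_simps [simp]:
  "Dmat (qc i) (qc i') x = 0" "Dmat (qc i) (pc i') x = (if i = i' then -1 else 0)" "Dmat (qc i) tc x = x $ qc i"
  "Dmat (pc i) (qc i') x = (if i = i' then 1 else 0)" "Dmat (pc i) (pc i') x = 0" "Dmat (pc i) tc x = x $ pc i"
  "Dmat tc (qc i') x = - x $ qc i'" "Dmat tc (pc i') x = - x $ pc i'" "Dmat tc tc x = 0"
  by (simp_all add: Dmat_def)

lemma Dmat0_antisym: "Dmat0 j l = - Dmat0 l j"
  by (cases j rule: idx_cases; cases l rule: idx_cases) auto

lemma Dmat1_antisym: "Dmat1 j l r = - Dmat1 l j r"
  by (cases j rule: idx_cases; cases l rule: idx_cases) auto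

lemma Dmat_antisym: "Dmat j l x = - Dmat l j x"
  unfolding Dmat_def by (subst Dmat0_antisym, subst Dmat1_antisym) (simp add: sum_negf)

lemma smooth_Dmat [intro, simp]: "smooth_fun (Dmat j l)"
proof -
  have "smooth_fun (\<lambda>x. Dmat0 j l + (\<Sum>r\<in>UNIV. Dmat1 j l r * x $ r))"
    by (intro smooth_add smooth_const smooth_sum smooth_cmult smooth_coord)
  then show ?thesis unfolding Dmat_def[abs_def] .
qed

lemma pd_Dmat [simp]: "pd m (Dmat j l) x = Dmat1 j l m"
proof -
  have "pd m (Dmat j l) x = pd m (\<lambda>x. Dmat0 j l + (\<Sum>r\<in>UNIV. Dmat1 j l r * x $ r)) x"
    unfolding Dmat_def[abs_def] by simp
  also have "\<dots> = pd m (\<lambda>x. (\<Sum>r\<in>UNIV. Dmat1 j l r * x $ r)) x"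
    by (subst pd_add) (auto intro!: pd_differentiable_sum pd_differentiable_mult)
  also have "\<dots> = (\<Sum>r\<in>UNIV. pd m (\<lambda>x. Dmat1 j l r * x $ r) x)"
    by (rule pd_sum) (auto intro!: pd_differentiable_mult)
  also have "\<dots> = (\<Sum>r\<in>UNIV. Dmat1 j l r * (if r = m then 1 else 0))"
    by (rule sum.cong) (auto simp: pd_mult)
  also have "\<dots> = Dmat1 j l m" by (subst sum.remove[of UNIV m]) auto
  finally show ?thesis .
qed

lemma Dsymb_simps [simp]:
  "Dsymb x \<xi> (qc i) = - \<xi> $ pc i + x $ qc i * \<xi> $ tc"
  "Dsymb x \<xi> (pc i) = \<xi> $ qc i + x $ pc i * \<xi> $ tc"
  "Dsymb x \<xi> tc = - (\<Sum>i\<in>UNIV. x $ qc i * \<xi> $ qc i + x $ pc i * \<xi> $ pc i)"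
  by (simp_all add: Dsymb_def sum_idx sum.distrib sum_negf algebra_simps)

lemma Dop_eq_Dsymb: "Dop S x \<xi> = (\<Sum>j\<in>UNIV. Dsymb x \<xi> j * pd j (\<lambda>y. S y \<xi>) x)"
  unfolding Dop_def
  by (simp add: sum_idx algebra_simps sum.distrib sum_distrib_left sum_distrib_right sum_subtractf)

lemma Xop_eq_Dsymb: "Xop k \<delta> S y \<eta> = (\<Sum>m\<in>UNIV. Dsymb y \<eta> m * pd m (\<lambda>y. S y \<eta>) y)
    + (2 * (real CARD('n) + 1) * \<delta> - real k) * \<eta> $ tc * S y \<eta>"
  for S :: "real^('n::finite idx) \<Rightarrow> real^('n idx) \<Rightarrow> real"
  unfolding Xop_def Dop_eq_Dsymb by simp

lemma sum_Dmat1_23: "(\<Sum>m\<in>UNIV. \<Sum>s\<in>UNIV. u m * Dmat1 j s m * h s)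
    = h tc * u j - (if j = tc then (\<Sum>r\<in>UNIV. u r * h r) else 0)"
  by (cases j rule: idx_cases) (simp_all add: sum_idx sum.distrib algebra_simps sum_negf)

lemma sum_Dmat1_12: "(\<Sum>r\<in>UNIV. \<Sum>s\<in>UNIV. Dmat1 r s l * \<xi> s * h r) = \<xi> tc * h l - \<xi> l * h tc"
  by (cases l rule: idx_cases) (simp_all add: sum_idx sum.distrib algebra_simps sum_negf)

lemma sum_Dmat1_diag:
  "(\<Sum>j\<in>UNIV. Dmat1 j (m::'n::finite idx) j) = (if m = tc then 2 * real CARD('n) else 0)"
  by (cases m rule: idx_cases) (simp_all add: sum_idx)

lemma sum_Dmat1_21: "(\<Sum>j\<in>UNIV. \<Sum>r\<in>UNIV. Dmat1 j r l * \<xi> j * w r) = \<xi> l * w tc - \<xi> tc * w l"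
proof -
  have "(\<Sum>j\<in>UNIV. \<Sum>r\<in>UNIV. Dmat1 j r l * \<xi> j * w r) = (\<Sum>r\<in>UNIV. \<Sum>j\<in>UNIV. Dmat1 j r l * \<xi> j * w r)"
    by (rule sum.swap)
  also have "\<dots> = - (\<Sum>r\<in>UNIV. \<Sum>j\<in>UNIV. Dmat1 r j l * \<xi> j * w r)"
    by (subst Dmat1_antisym) (simp add: sum_negf)
  also have "\<dots> = \<xi> l * w tc - \<xi> tc * w l" unfolding sum_Dmat1_12 by simp
  finally show ?thesis .
qed

lemma Dsymb_orthogonal: "(\<Sum>m\<in>UNIV. Dsymb x \<xi> m * \<xi> $ m) = 0"
proof -
  have "(\<Sum>m\<in>UNIV. Dsymb x \<xi> m * \<xi> $ m) = (\<Sum>m\<in>UNIV. \<Sum>l\<in>UNIV. Dmat m l x * (\<xi> $ l * \<xi> $ m))"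
    unfolding Dsymb_def sum_distrib_right by (simp add: mult.assoc)
  also have "\<dots> = 0"
    by (rule antisym_sym_contraction_eq_0) (rule Dmat_antisym, simp add: mult.commute)
  finally show ?thesis .
qed

lemma sum_Dmat_fibre: "(\<Sum>m\<in>UNIV. Dmat m r x * \<xi> $ m) = - Dsymb x \<xi> r"
  unfolding Dsymb_def by (subst Dmat_antisym) (simp add: sum_negf)

lemma smooth_Dsymb [simp]: "smooth_fun (\<lambda>y. Dsymb y \<xi> m)"
  unfolding Dsymb_def by (intro smooth_sum smooth_mult smooth_Dmat smooth_const)

lemma pd_Dsymb: "pd j (\<lambda>y. Dsymb y \<xi> m) x = (\<Sum>l\<in>UNIV. Dmat1 m l j * \<xi> $ l)"
  unfolding Dsymb_def
  by (simp add: pd_sum_smooth pd_mult_smooth smooth_mult smooth_Dmat)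

lemma pd_differentiable_Dsymb [simp]: "pd_differentiable l (\<lambda>\<eta>. Dsymb x \<eta> m) \<xi>"
  unfolding Dsymb_def
  by (intro pd_differentiable_sum pd_differentiable_mult pd_differentiable_const pd_differentiable_coord)

lemma pd_fibre_Dsymb [simp]: "pd l (\<lambda>\<eta>. Dsymb x \<eta> m) \<xi> = Dmat m l x"
  unfolding Dsymb_def by (subst pd_sum) (auto intro!: pd_differentiable_mult simp: pd_mult)

section \<open>Contact vector fields\<close>

lemma axis_1_nth: "axis j (1::real) $ r = (if r = j then 1 else 0)"
  by (simp add: axis_def)

lemma card_plus_1_neq_0: "real CARD('n::finite) + 1 \<noteq> 0"
  by (simp add: add_nonneg_eq_0_iff)

lemma cvf_nth:
  fixes g :: "real^('n::finite idx) \<Rightarrow> real"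
  shows "cvf g x $ j = - (\<Sum>m\<in>UNIV. Dmat j m x * pd m g x) - 2 * (if j = tc then g x else 0)"
proof -
  have Y: "Dsymb x (axis j 1) m = - Dmat j m x" for m
    unfolding Dsymb_def axis_1_nth by (simp add: Dmat_antisym[of m j])
  have a: "2 * (real CARD('n) + 1) * (- 1 / (real CARD('n) + 1)) - real 0 = (-2::real)"
    using card_plus_1_neq_0[where 'n='n] by (simp add: field_simps)
  have "cvf g x $ j = Dop (\<lambda>y \<xi>. g y) x (axis j 1) + (-2) * axis j 1 $ tc * g x"
    unfolding cvf_def Xop_def using a by simp
  also have "Dop (\<lambda>y \<xi>. g y) x (axis j 1) = - (\<Sum>m\<in>UNIV. Dmat j m x * pd m g x)"
    unfolding Dop_eq_Dsymb Y by (simp add: sum_negf)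
  finally show ?thesis by (simp add: axis_1_nth)
qed

lemma cvf_nth_coords:
  "cvf g x $ qc i = pd (pc i) g x - x $ qc i * pd tc g x"
  "cvf g x $ pc i = - pd (qc i) g x - x $ pc i * pd tc g x"
  "cvf g x $ tc = (\<Sum>i\<in>UNIV. x $ qc i * pd (qc i) g x + x $ pc i * pd (pc i) g x) - 2 * g x"
  unfolding cvf_nth by (simp_all add: sum_idx sum.distrib sum_negf algebra_simps)

abbreviation (input) ind_tc :: "'n::finite idx \<Rightarrow> real" where "ind_tc j \<equiv> (if j = tc then 1 else 0)"

lemma cvf_nth_fun: "(\<lambda>y. cvf g y $ j) = (\<lambda>y. - (\<Sum>m\<in>UNIV. Dmat j m y * pd m g y) - 2 * ind_tc j * g y)"
  by (rule ext) (simp add: cvf_nth)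

lemma smooth_cvf:
  assumes g: "smooth_fun g"
  shows "smooth_fun (\<lambda>y. cvf g y $ j)"
  unfolding cvf_nth_fun
  by (intro smooth_diff smooth_minus smooth_sum smooth_mult smooth_const smooth_Dmat smooth_pd g)

lemma smooth_vf_cvf: "smooth_fun g \<Longrightarrow> smooth_vf (cvf g)"
  unfolding smooth_vf_def by (blast intro: smooth_cvf)

definition contact_hamiltonian :: "(real^('n::finite idx) \<Rightarrow> real^('n idx)) \<Rightarrow> real^('n idx) \<Rightarrow> real" where
  "contact_hamiltonian Z y = (\<Sum>j\<in>UNIV. alpha y j * Z y $ j)"

lemma alpha_simps [simp]:
  "alpha y (qc i) = y $ pc i / 2" "alpha y (pc i) = - (y $ qc i) / 2" "alpha y tc = - 1 / 2"
  by (simp_all add: alpha_def qc_def pc_def tc_def)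

lemma alpha_fun:
  "(\<lambda>y. alpha y (qc i)) = (\<lambda>y. (1/2) * y $ pc i)"
  "(\<lambda>y. alpha y (pc i)) = (\<lambda>y. (- 1/2) * y $ qc i)"
  "(\<lambda>y. alpha y tc) = (\<lambda>y. - 1 / 2)"
  by (auto simp: fun_eq_iff)

lemma smooth_alpha [simp]: "smooth_fun (\<lambda>y. alpha y l)"
  by (cases l rule: idx_cases) (simp_all only: alpha_fun smooth_cmult smooth_coord smooth_const)

lemma pd_half [simp]:
  fixes j :: "'a::finite" and x :: "real^'a"
  shows "pd m (\<lambda>y. y $ j / 2) x = (if j = m then 1/2 else 0)"
    "pd m (\<lambda>y. - (y $ j / 2)) x = (if j = m then - 1/2 else 0)"
  by (simp_all add: pd_divide_const pd_minus pd_differentiable_divide)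

lemma smooth_contact_hamiltonian: "smooth_vf Z \<Longrightarrow> smooth_fun (contact_hamiltonian Z)"
  unfolding smooth_vf_def contact_hamiltonian_def[abs_def]
  by (intro smooth_sum smooth_mult smooth_alpha) blast

lemma pd_contact_hamiltonian:
  assumes "smooth_vf Z"
  shows "pd l (contact_hamiltonian Z) x
    = (\<Sum>j\<in>UNIV. pd l (\<lambda>y. alpha y j) x * Z x $ j) + (\<Sum>j\<in>UNIV. alpha x j * pd l (\<lambda>y. Z y $ j) x)"
  using assms unfolding smooth_vf_def contact_hamiltonian_def[abs_def]
  by (simp add: pd_sum_smooth pd_mult_smooth smooth_mult sum.distrib)

lemma Lie_form_alpha:
  fixes Z :: "real^('n::finite idx) \<Rightarrow> real^('n idx)"
  assumes "smooth_vf Z"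
  shows "Lie_form Z alpha x tc = pd tc (contact_hamiltonian Z) x"
    and "Lie_form Z alpha x (qc i) = pd (qc i) (contact_hamiltonian Z) x + Z x $ pc i"
    and "Lie_form Z alpha x (pc i) = pd (pc i) (contact_hamiltonian Z) x - Z x $ qc i"
  unfolding Lie_form_def pd_contact_hamiltonian[OF assms]
  by (simp_all add: sum_idx algebra_simps)

lemma contact_hamiltonian_cvf: "contact_hamiltonian (cvf g) = g"
  by (simp add: fun_eq_iff contact_hamiltonian_def sum_idx cvf_nth_coords sum_distrib_left
      sum_distrib_right sum.distrib algebra_simps sum_subtractf sum_negf)

lemma contact_vf_cvf:
  fixes g :: "real^('n::finite idx) \<Rightarrow> real"
  assumes g: "smooth_fun g"
  shows "contact_vf (cvf g)"
  unfolding contact_vf_def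
proof (intro conjI exI[of _ "\<lambda>x. - 2 * pd tc g x"] allI)
  show "smooth_vf (cvf g)" by (rule smooth_vf_cvf[OF g])
  show "smooth_fun (\<lambda>x. - 2 * pd tc g x)" by (intro smooth_cmult smooth_pd g)
  fix x l
  show "Lie_form (cvf g) alpha x l = - 2 * pd tc g x * alpha x l"
    using Lie_form_alpha[OF smooth_vf_cvf[OF g], unfolded contact_hamiltonian_cvf]
    by (cases l rule: idx_cases) (simp_all add: cvf_nth_coords algebra_simps)
qed

text \<open>Conversely, the conformal factor of a contact field is forced by the \<open>dt\<close>-component of
  \<open>L\<^sub>Z\<alpha>\<close>, and the remaining components determine \<open>Z\<close> from its Hamiltonian.\<close>

lemma contact_vf_eq_cvf:
  fixes Z :: "real^('n::finite idx) \<Rightarrow> real^('n idx)"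
  assumes "contact_vf Z"
  shows "Z = cvf (contact_hamiltonian Z)"
proof -
  define g where "g = contact_hamiltonian Z"
  have Zs: "smooth_vf Z" using assms unfolding contact_vf_def by blast
  obtain f where f: "\<And>x l. Lie_form Z alpha x l = f x * alpha x l"
    using assms unfolding contact_vf_def by blast
  have ft: "f x = - 2 * pd tc g x" for x
    using f[of x tc] Lie_form_alpha(1)[OF Zs, of x] unfolding g_def by simp
  have zp: "Z x $ pc i = - pd (qc i) g x - x $ pc i * pd tc g x" for x i
    using f[of x "qc i"] Lie_form_alpha(2)[OF Zs, of x i] ft[of x] unfolding g_def
    by (simp add: algebra_simps)
  have zq: "Z x $ qc i = pd (pc i) g x - x $ qc i * pd tc g x" for x i
    using f[of x "pc i"] Lie_form_alpha(3)[OF Zs, of x i] ft[of x] unfolding g_def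
    by (simp add: algebra_simps)
  have zt: "Z x $ tc = (\<Sum>i\<in>UNIV. x $ qc i * pd (qc i) g x + x $ pc i * pd (pc i) g x) - 2 * g x" for x
  proof -
    have "g x = (\<Sum>i\<in>UNIV. x $ pc i / 2 * Z x $ qc i) + (\<Sum>i\<in>UNIV. - (x $ qc i) / 2 * Z x $ pc i)
        - Z x $ tc / 2"
      unfolding g_def contact_hamiltonian_def by (simp add: sum_idx)
    then show ?thesis unfolding zp zq
      by (simp add: sum_distrib_left sum_distrib_right sum.distrib sum_subtractf algebra_simps sum_negf
          flip: sum_divide_distrib)
  qed
  have "Z x $ j = cvf g x $ j" for x j
    by (cases j rule: idx_cases) (simp_all only: zp zq zt cvf_nth_coords)
  then show ?thesis unfolding g_def by (simp add: fun_eq_iff vec_eq_iff)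
qed

section \<open>The commutator of \<open>X\<close> with Lie derivatives\<close>

text \<open>The commutator as an identity between real numbers, the derivatives being opaque: \<open>Zv j\<close>,
  \<open>dZ l j\<close>, \<open>ddZ m l j\<close> stand for \<open>Z\<^sup>j\<close>, \<open>\<partial>\<^sub>l Z\<^sup>j\<close>, \<open>\<partial>\<^sub>m \<partial>\<^sub>l Z\<^sup>j\<close>, \<open>ddv m\<close> for \<open>\<partial>\<^sub>m div Z\<close>;
  \<open>S0\<close>, \<open>S1 j\<close>, \<open>S2 m j\<close>, \<open>E l\<close>, \<open>M m l\<close> for \<open>S\<close>, \<open>\<partial>\<^sub>j S\<close>, \<open>\<partial>\<^sub>m \<partial>\<^sub>j S\<close>, \<open>\<partial>S/\<partial>\<xi>\<^sub>l\<close>,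
  \<open>\<partial>\<^sub>m \<partial>S/\<partial>\<xi>\<^sub>l\<close>; \<open>Y m\<close>, \<open>dY j m\<close>, \<open>BB m l\<close> for \<open>Dsymb\<close> and its \<open>x\<close>- and \<open>\<xi>\<close>-derivatives;
  \<open>t\<close> is the index of the coordinate \<open>t\<close> and \<open>a = a(k,\<delta>)\<close>.\<close>

lemma commutator_rearrange:
  fixes Zv S1 E Y \<xi> ddv :: "'i::finite \<Rightarrow> real" and dZ S2 M dY BB :: "'i \<Rightarrow> 'i \<Rightarrow> real"
    and ddZ :: "'i \<Rightarrow> 'i \<Rightarrow> 'i \<Rightarrow> real" and t :: 'i
  assumes S2sym: "\<And>m j. S2 m j = S2 j m"
  defines "dv \<equiv> (\<Sum>j\<in>UNIV. dZ j j)"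
  shows "(\<Sum>m\<in>UNIV. Y m * ((\<Sum>j\<in>UNIV. dZ m j * S1 j + Zv j * S2 m j) + \<delta> * (ddv m * S0 + dv * S1 m)
            - (\<Sum>j\<in>UNIV. \<Sum>l\<in>UNIV. ddZ m l j * \<xi> j * E l + dZ l j * \<xi> j * M m l)))
        + a * \<xi> t * ((\<Sum>j\<in>UNIV. Zv j * S1 j) + \<delta> * dv * S0 - (\<Sum>j\<in>UNIV. \<Sum>l\<in>UNIV. dZ l j * \<xi> j * E l))
      - ((\<Sum>j\<in>UNIV. Zv j * ((\<Sum>m\<in>UNIV. dY j m * S1 m + Y m * S2 j m) + a * \<xi> t * S1 j))
        + \<delta>' * dv * ((\<Sum>m\<in>UNIV. Y m * S1 m) + a * \<xi> t * S0)
        - (\<Sum>j\<in>UNIV. \<Sum>l\<in>UNIV. dZ l j * \<xi> j * ((\<Sum>m\<in>UNIV. BB m l * S1 m + Y m * M m l)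
             + a * ((if l = t then S0 else 0) + \<xi> t * E l))))
    = (\<Sum>j\<in>UNIV. ((\<Sum>m\<in>UNIV. Y m * dZ m j - Zv m * dY m j) + (\<Sum>l\<in>UNIV. (\<Sum>m\<in>UNIV. dZ l m * \<xi> m) * BB j l)
          + (\<delta> - \<delta>') * dv * Y j) * S1 j)
      + (\<delta> * (\<Sum>m\<in>UNIV. Y m * ddv m) + a * (\<Sum>j\<in>UNIV. dZ t j * \<xi> j) + a * (\<delta> - \<delta>') * \<xi> t * dv) * S0
      - (\<Sum>l\<in>UNIV. (\<Sum>m\<in>UNIV. Y m * (\<Sum>j\<in>UNIV. ddZ m l j * \<xi> j)) * E l)"
  (is "?lhs = ?rhs")
proof -
  have S2: "(\<Sum>m\<in>UNIV. Y m * (\<Sum>j\<in>UNIV. Zv j * S2 m j)) = (\<Sum>j\<in>UNIV. Zv j * (\<Sum>m\<in>UNIV. Y m * S2 j m))"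
    by (subst sum_mult_sum_swap) (simp add: sum_distrib_left S2sym ac_simps)
  have M: "(\<Sum>m\<in>UNIV. Y m * (\<Sum>j\<in>UNIV. \<Sum>l\<in>UNIV. dZ l j * \<xi> j * M m l))
      = (\<Sum>j\<in>UNIV. \<Sum>l\<in>UNIV. dZ l j * \<xi> j * (\<Sum>m\<in>UNIV. Y m * M m l))"
    by (subst sum_mult_sum_swap, subst sum_mult_sum_swap) (simp add: sum_distrib_left ac_simps)
  have E: "(\<Sum>m\<in>UNIV. Y m * (\<Sum>j\<in>UNIV. \<Sum>l\<in>UNIV. ddZ m l j * \<xi> j * E l))
      = (\<Sum>l\<in>UNIV. (\<Sum>m\<in>UNIV. Y m * (\<Sum>j\<in>UNIV. ddZ m l j * \<xi> j)) * E l)"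
  proof -
    have "(\<Sum>j\<in>UNIV. \<Sum>l\<in>UNIV. ddZ m l j * \<xi> j * E l) = (\<Sum>l\<in>UNIV. (\<Sum>j\<in>UNIV. ddZ m l j * \<xi> j) * E l)"
      for m by (simp add: sum_distrib_right) (rule sum.swap)
    then have "(\<Sum>m\<in>UNIV. Y m * (\<Sum>j\<in>UNIV. \<Sum>l\<in>UNIV. ddZ m l j * \<xi> j * E l))
        = (\<Sum>m\<in>UNIV. Y m * (\<Sum>l\<in>UNIV. (\<Sum>j\<in>UNIV. ddZ m l j * \<xi> j) * E l))"
      by simp
    also have "\<dots> = (\<Sum>l\<in>UNIV. (\<Sum>m\<in>UNIV. Y m * (\<Sum>j\<in>UNIV. ddZ m l j * \<xi> j)) * E l)"
      by (subst sum_mult_sum_swap) (simp add: sum_distrib_right mult.assoc)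
    finally show ?thesis .
  qed
  have S1a: "(\<Sum>m\<in>UNIV. Y m * (\<Sum>j\<in>UNIV. dZ m j * S1 j)) = (\<Sum>j\<in>UNIV. (\<Sum>m\<in>UNIV. Y m * dZ m j) * S1 j)"
    by (subst sum_mult_sum_swap) (simp add: sum_distrib_right mult.assoc)
  have S1b: "(\<Sum>j\<in>UNIV. Zv j * (\<Sum>m\<in>UNIV. dY j m * S1 m)) = (\<Sum>m\<in>UNIV. (\<Sum>j\<in>UNIV. Zv j * dY j m) * S1 m)"
    by (subst sum_mult_sum_swap) (simp add: sum_distrib_right mult.assoc)
  have S1c: "(\<Sum>j\<in>UNIV. \<Sum>l\<in>UNIV. dZ l j * \<xi> j * (\<Sum>m\<in>UNIV. BB m l * S1 m))
      = (\<Sum>m\<in>UNIV. (\<Sum>l\<in>UNIV. (\<Sum>j\<in>UNIV. dZ l j * \<xi> j) * BB m l) * S1 m)"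
  proof -
    have "(\<Sum>j\<in>UNIV. \<Sum>l\<in>UNIV. dZ l j * \<xi> j * (\<Sum>m\<in>UNIV. BB m l * S1 m))
        = (\<Sum>l\<in>UNIV. (\<Sum>j\<in>UNIV. dZ l j * \<xi> j) * (\<Sum>m\<in>UNIV. BB m l * S1 m))"
      by (subst sum.swap) (simp add: sum_distrib_right)
    also have "\<dots> = (\<Sum>m\<in>UNIV. (\<Sum>l\<in>UNIV. (\<Sum>j\<in>UNIV. dZ l j * \<xi> j) * BB m l) * S1 m)"
      by (subst sum_mult_sum_swap) (simp add: sum_distrib_right mult.assoc)
    finally show ?thesis .
  qed
  have T: "(\<Sum>j\<in>UNIV. \<Sum>l\<in>UNIV. dZ l j * \<xi> j * (if l = t then S0 else 0)) = (\<Sum>j\<in>UNIV. dZ t j * \<xi> j) * S0"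
    by (simp add: sum_distrib_right)
  have "?lhs = (\<Sum>m\<in>UNIV. Y m * (\<Sum>j\<in>UNIV. dZ m j * S1 j)) - (\<Sum>j\<in>UNIV. Zv j * (\<Sum>m\<in>UNIV. dY j m * S1 m))
      + (\<Sum>j\<in>UNIV. \<Sum>l\<in>UNIV. dZ l j * \<xi> j * (\<Sum>m\<in>UNIV. BB m l * S1 m))
      + ((\<Sum>m\<in>UNIV. Y m * (\<Sum>j\<in>UNIV. Zv j * S2 m j)) - (\<Sum>j\<in>UNIV. Zv j * (\<Sum>m\<in>UNIV. Y m * S2 j m)))
      + ((\<Sum>j\<in>UNIV. \<Sum>l\<in>UNIV. dZ l j * \<xi> j * (\<Sum>m\<in>UNIV. Y m * M m l))
         - (\<Sum>m\<in>UNIV. Y m * (\<Sum>j\<in>UNIV. \<Sum>l\<in>UNIV. dZ l j * \<xi> j * M m l)))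
      + \<delta> * S0 * (\<Sum>m\<in>UNIV. Y m * ddv m) + \<delta> * dv * (\<Sum>m\<in>UNIV. Y m * S1 m)
      - \<delta>' * dv * (\<Sum>m\<in>UNIV. Y m * S1 m) - (\<Sum>m\<in>UNIV. Y m * (\<Sum>j\<in>UNIV. \<Sum>l\<in>UNIV. ddZ m l j * \<xi> j * E l))
      + a * (\<delta> - \<delta>') * \<xi> t * dv * S0
      + a * (\<Sum>j\<in>UNIV. \<Sum>l\<in>UNIV. dZ l j * \<xi> j * (if l = t then S0 else 0))"
    by (simp only: sum.distrib sum_subtractf distrib_left right_diff_distrib sum_distrib_left)
      (simp add: algebra_simps)
  also have "\<dots> = ?rhs"
    unfolding S2 M E S1a S1b S1c T
    by (simp add: sum.distrib sum_subtractf algebra_simps sum_distrib_left sum_distrib_right)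
  finally show ?thesis .
qed
lemma pd_Lder:
  fixes Z :: "real^('n::finite idx) \<Rightarrow> real^('n idx)"
  assumes Zs: "\<And>j. smooth_fun (\<lambda>y. Z y $ j)" and H: "\<And>y. hom_poly k (S y)"
    and Sm: "\<And>\<eta>. smooth_fun (\<lambda>y. S y \<eta>)"
  shows "pd m (\<lambda>y. Lder \<delta> Z S y \<xi>) x =
    (\<Sum>j\<in>UNIV. pd m (\<lambda>y. Z y $ j) x * pd j (\<lambda>y. S y \<xi>) x + Z x $ j * pd m (pd j (\<lambda>y. S y \<xi>)) x)
    + \<delta> * (pd m (\<lambda>y. \<Sum>j\<in>UNIV. pd j (\<lambda>y. Z y $ j) y) x * S x \<xi> + (\<Sum>j\<in>UNIV. pd j (\<lambda>y. Z y $ j) x) * pd m (\<lambda>y. S y \<xi>) x)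
    - (\<Sum>j\<in>UNIV. \<Sum>l\<in>UNIV. pd m (pd l (\<lambda>y. Z y $ j)) x * \<xi> $ j * pd l (S x) \<xi>
        + pd l (\<lambda>y. Z y $ j) x * \<xi> $ j * pd m (\<lambda>y. pd l (S y) \<xi>) x)"
proof -
  have fs: "smooth_fun (\<lambda>y. pd l (S y) \<xi>)" for l using smooth_fibre_pd[OF H Sm] .
  have e: "(\<lambda>y. Lder \<delta> Z S y \<xi>) = (\<lambda>y. (\<Sum>j\<in>UNIV. Z y $ j * pd j (\<lambda>y. S y \<xi>) y)
     + \<delta> * (\<Sum>j\<in>UNIV. pd j (\<lambda>y. Z y $ j) y) * S y \<xi>
     - (\<Sum>j\<in>UNIV. \<Sum>l\<in>UNIV. pd l (\<lambda>y. Z y $ j) y * \<xi> $ j * pd l (S y) \<xi>))"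
    by (simp add: Lder_def[abs_def])
  show ?thesis unfolding e
    by (simp add: pd_add_smooth pd_diff_smooth pd_mult_smooth pd_sum_smooth smooth_add smooth_mult
        smooth_diff smooth_sum smooth_pd Zs Sm fs sum.distrib algebra_simps)
qed

lemma pd_Xop:
  fixes S :: "real^('n::finite idx) \<Rightarrow> real^('n idx) \<Rightarrow> real"
  assumes Sm: "\<And>\<eta>. smooth_fun (\<lambda>y. S y \<eta>)"
  shows "pd j (\<lambda>y. Xop k \<delta> S y \<xi>) x =
    (\<Sum>m\<in>UNIV. pd j (\<lambda>y. Dsymb y \<xi> m) x * pd m (\<lambda>y. S y \<xi>) x + Dsymb x \<xi> m * pd j (pd m (\<lambda>y. S y \<xi>)) x)
    + (2 * (real CARD('n) + 1) * \<delta> - real k) * \<xi> $ tc * pd j (\<lambda>y. S y \<xi>) x"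
  unfolding Xop_eq_Dsymb
  by (simp add: pd_add_smooth pd_diff_smooth pd_mult_smooth pd_sum_smooth smooth_add smooth_mult
        smooth_diff smooth_sum smooth_pd Sm)

lemma pd_fibre_Xop:
  fixes S :: "real^('n::finite idx) \<Rightarrow> real^('n idx) \<Rightarrow> real"
  assumes H: "\<And>y. hom_poly k (S y)" and Sm: "\<And>\<eta>. smooth_fun (\<lambda>y. S y \<eta>)"
  shows "pd l (Xop k \<delta> S x) \<xi> =
    (\<Sum>m\<in>UNIV. Dmat m l x * pd m (\<lambda>y. S y \<xi>) x + Dsymb x \<xi> m * pd m (\<lambda>y. pd l (S y) \<xi>) x)
    + (2 * (real CARD('n) + 1) * \<delta> - real k) * ((if l = tc then S x \<xi> else 0) + \<xi> $ tc * pd l (S x) \<xi>)"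
proof -
  have e: "Xop k \<delta> S x = (\<lambda>\<eta>. (\<Sum>m\<in>UNIV. Dsymb x \<eta> m * pd m (\<lambda>y. S y \<eta>) x)
    + (2 * (real CARD('n) + 1) * \<delta> - real k) * \<eta> $ tc * S x \<eta>)"
    by (rule ext) (rule Xop_eq_Dsymb)
  have ml: "pd_differentiable l (\<lambda>\<eta>. pd m (\<lambda>y. S y \<eta>) x) \<xi>" for m by (rule pd_differentiable_fibre[OF H Sm])
  have hl: "pd_differentiable l (S x) \<xi>" by (rule hom_poly_pd_differentiable[OF H])
  have mx: "pd l (\<lambda>\<eta>. pd m (\<lambda>y. S y \<eta>) x) \<xi> = pd m (\<lambda>y. pd l (S y) \<xi>) x" for m
    by (rule pd_fibre_base_commute[OF H Sm])
  show ?thesis unfolding e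
    by (simp add: pd_add pd_mult pd_sum pd_differentiable_add pd_differentiable_mult pd_differentiable_sum ml hl mx)
      (simp add: algebra_simps)
qed

lemma commutator_formula:
  fixes Z :: "real^('n::finite idx) \<Rightarrow> real^('n idx)" and S :: "real^('n idx) \<Rightarrow> real^('n idx) \<Rightarrow> real"
    and \<delta> \<delta>' :: real and x \<xi> :: "real^('n idx)" and k :: nat
  assumes Zs: "\<And>j. smooth_fun (\<lambda>y. Z y $ j)" and H: "\<And>y. hom_poly k (S y)"
    and Sm: "\<And>\<eta>. smooth_fun (\<lambda>y. S y \<eta>)"
  defines "a \<equiv> 2 * (real CARD('n) + 1) * \<delta> - real k"
  defines "dv \<equiv> (\<Sum>j\<in>UNIV. pd j (\<lambda>y. Z y $ j) x)"
  shows "Xop k \<delta> (Lder \<delta> Z S) x \<xi> - Lder \<delta>' Z (Xop k \<delta> S) x \<xi> =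
      (\<Sum>j\<in>UNIV. ((\<Sum>m\<in>UNIV. Dsymb x \<xi> m * pd m (\<lambda>y. Z y $ j) x - Z x $ m * pd m (\<lambda>y. Dsymb y \<xi> j) x)
          + (\<Sum>l\<in>UNIV. (\<Sum>m\<in>UNIV. pd l (\<lambda>y. Z y $ m) x * \<xi> $ m) * Dmat j l x)
          + (\<delta> - \<delta>') * dv * Dsymb x \<xi> j) * pd j (\<lambda>y. S y \<xi>) x)
      + (\<delta> * (\<Sum>m\<in>UNIV. Dsymb x \<xi> m * pd m (\<lambda>y. \<Sum>j\<in>UNIV. pd j (\<lambda>y. Z y $ j) y) x)
         + a * (\<Sum>j\<in>UNIV. pd tc (\<lambda>y. Z y $ j) x * \<xi> $ j) + a * (\<delta> - \<delta>') * \<xi> $ tc * dv) * S x \<xi>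
      - (\<Sum>l\<in>UNIV. (\<Sum>m\<in>UNIV. Dsymb x \<xi> m * (\<Sum>j\<in>UNIV. pd m (pd l (\<lambda>y. Z y $ j)) x * \<xi> $ j)) * pd l (S x) \<xi>)"
proof -
  have L: "Xop k \<delta> (Lder \<delta> Z S) x \<xi> =
    (\<Sum>m\<in>UNIV. Dsymb x \<xi> m * ((\<Sum>j\<in>UNIV. pd m (\<lambda>y. Z y $ j) x * pd j (\<lambda>y. S y \<xi>) x + Z x $ j * pd m (pd j (\<lambda>y. S y \<xi>)) x)
    + \<delta> * (pd m (\<lambda>y. \<Sum>j\<in>UNIV. pd j (\<lambda>y. Z y $ j) y) x * S x \<xi> + dv * pd m (\<lambda>y. S y \<xi>) x)
    - (\<Sum>j\<in>UNIV. \<Sum>l\<in>UNIV. pd m (pd l (\<lambda>y. Z y $ j)) x * \<xi> $ j * pd l (S x) \<xi>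
        + pd l (\<lambda>y. Z y $ j) x * \<xi> $ j * pd m (\<lambda>y. pd l (S y) \<xi>) x)))
    + a * \<xi> $ tc * ((\<Sum>j\<in>UNIV. Z x $ j * pd j (\<lambda>y. S y \<xi>) x) + \<delta> * dv * S x \<xi>
        - (\<Sum>j\<in>UNIV. \<Sum>l\<in>UNIV. pd l (\<lambda>y. Z y $ j) x * \<xi> $ j * pd l (S x) \<xi>))"
    unfolding Xop_eq_Dsymb a_def dv_def
    by (simp only: pd_Lder[OF Zs H Sm]) (simp only: Lder_def)
  have R: "Lder \<delta>' Z (Xop k \<delta> S) x \<xi> =
    (\<Sum>j\<in>UNIV. Z x $ j * ((\<Sum>m\<in>UNIV. pd j (\<lambda>y. Dsymb y \<xi> m) x * pd m (\<lambda>y. S y \<xi>) x + Dsymb x \<xi> m * pd j (pd m (\<lambda>y. S y \<xi>)) x)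
       + a * \<xi> $ tc * pd j (\<lambda>y. S y \<xi>) x))
    + \<delta>' * dv * ((\<Sum>m\<in>UNIV. Dsymb x \<xi> m * pd m (\<lambda>y. S y \<xi>) x) + a * \<xi> $ tc * S x \<xi>)
    - (\<Sum>j\<in>UNIV. \<Sum>l\<in>UNIV. pd l (\<lambda>y. Z y $ j) x * \<xi> $ j *
        ((\<Sum>m\<in>UNIV. Dmat m l x * pd m (\<lambda>y. S y \<xi>) x + Dsymb x \<xi> m * pd m (\<lambda>y. pd l (S y) \<xi>) x)
         + a * ((if l = tc then S x \<xi> else 0) + \<xi> $ tc * pd l (S x) \<xi>)))"
    unfolding Lder_def[of \<delta>' Z] a_def dv_def
    by (simp only: pd_Xop[OF Sm] pd_fibre_Xop[OF H Sm]) (simp only: Xop_eq_Dsymb)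
  have S2: "pd m (pd j (\<lambda>y. S y \<xi>)) x = pd j (pd m (\<lambda>y. S y \<xi>)) x" for m j
    by (rule pd_commute[OF Sm])
  show ?thesis unfolding L R dv_def
    by (rule commutator_rearrange[OF S2])
qed

lemma pd_cvf_fun:
  assumes g: "smooth_fun g"
  shows "(\<lambda>y. pd l (\<lambda>y. cvf g y $ j) y) =
    (\<lambda>y. - (\<Sum>m\<in>UNIV. Dmat1 j m l * pd m g y + Dmat j m y * pd l (pd m g) y) - 2 * ind_tc j * pd l g y)"
proof (rule ext)
  fix y
  have sg: "smooth_fun (pd m g)" for m using g by (rule smooth_pd)
  show "pd l (\<lambda>y. cvf g y $ j) y =
    - (\<Sum>m\<in>UNIV. Dmat1 j m l * pd m g y + Dmat j m y * pd l (pd m g) y) - 2 * ind_tc j * pd l g y"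
    unfolding cvf_nth_fun
    by (simp add: pd_add_smooth pd_diff_smooth pd_mult_smooth pd_sum_smooth smooth_add smooth_mult
        smooth_diff smooth_sum smooth_minus sg g sum_negf pd_minus smooth_imp_pd_differentiable)
qed

lemma pd_cvf:
  assumes g: "smooth_fun g"
  shows "pd l (\<lambda>y. cvf g y $ j) y =
    - (\<Sum>m\<in>UNIV. Dmat1 j m l * pd m g y + Dmat j m y * pd l (pd m g) y) - 2 * ind_tc j * pd l g y"
  using fun_cong[OF pd_cvf_fun[OF g, of l j]] by simp

lemma pd2_cvf:
  assumes g: "smooth_fun g"
  shows "pd m (pd l (\<lambda>y. cvf g y $ j)) x =
    - (\<Sum>r\<in>UNIV. Dmat1 j r l * pd m (pd r g) x
         + (Dmat1 j r m * pd l (pd r g) x + Dmat j r x * pd m (pd l (pd r g)) x))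
    - 2 * ind_tc j * pd m (pd l g) x"
proof -
  have sg: "smooth_fun (pd m g)" for m using g by (rule smooth_pd)
  have sg2: "smooth_fun (pd l (pd m g))" for l m using sg by (rule smooth_pd)
  have e: "pd l (\<lambda>y. cvf g y $ j)
      = (\<lambda>y. - (\<Sum>m\<in>UNIV. Dmat1 j m l * pd m g y + Dmat j m y * pd l (pd m g) y) - 2 * ind_tc j * pd l g y)"
    using pd_cvf_fun[OF g] by (simp add: eta_contract_eq)
  show ?thesis unfolding e
    by (simp add: pd_add_smooth pd_diff_smooth pd_mult_smooth pd_sum_smooth smooth_add smooth_mult
        smooth_diff smooth_sum smooth_minus sg sg2 g sum_negf pd_minus smooth_imp_pd_differentiable
        sum.distrib algebra_simps)
qed

lemma div_cvf:
  fixes g :: "real^('n::finite idx) \<Rightarrow> real"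
  assumes g: "smooth_fun g"
  shows "(\<Sum>j\<in>UNIV. pd j (\<lambda>y. cvf g y $ j) y) = - 2 * (real CARD('n) + 1) * pd tc g y"
proof -
  have "(\<Sum>j\<in>UNIV. pd j (\<lambda>y. cvf g y $ j) y)
     = - (\<Sum>m\<in>UNIV. (\<Sum>j\<in>UNIV. Dmat1 j m j) * pd m g y)
       - (\<Sum>j\<in>UNIV. \<Sum>m\<in>UNIV. Dmat j m y * pd j (pd m g) y) - 2 * pd tc g y"
    unfolding pd_cvf[OF g]
    by (simp add: sum.distrib sum_subtractf sum_negf sum_distrib_right sum.swap[of "\<lambda>j m. Dmat1 j m j * pd m g y"])
  also have "(\<Sum>j\<in>UNIV. \<Sum>m\<in>UNIV. Dmat j m y * pd j (pd m g) y) = 0"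
    by (rule antisym_sym_contraction_eq_0) (auto intro: Dmat_antisym pd_commute smooth_pd g)
  also have "(\<Sum>m\<in>UNIV. (\<Sum>j\<in>UNIV. Dmat1 j m j) * pd m g y) = 2 * real CARD('n) * pd tc g y"
    unfolding sum_Dmat1_diag by simp
  finally show ?thesis by (simp add: algebra_simps)
qed

lemma pd_div_cvf:
  fixes g :: "real^('n::finite idx) \<Rightarrow> real"
  assumes g: "smooth_fun g"
  shows "pd m (\<lambda>y. \<Sum>j\<in>UNIV. pd j (\<lambda>y. cvf g y $ j) y) x = - 2 * (real CARD('n) + 1) * pd m (pd tc g) x"
proof -
  have e: "(\<lambda>y. \<Sum>j\<in>UNIV. pd j (\<lambda>y. cvf g y $ j) y) = (\<lambda>y. (- 2 * (real CARD('n) + 1)) * pd tc g y)"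
    by (rule ext) (simp add: div_cvf[OF g])
  show ?thesis unfolding e
    by (subst pd_cmult) (auto intro: smooth_imp_pd_differentiable smooth_pd g)
qed

lemma pd_cvf_contract:
  fixes g :: "real^('n::finite idx) \<Rightarrow> real" and x \<xi> :: "real^('n idx)"
  assumes g: "smooth_fun g"
  shows "(\<Sum>m\<in>UNIV. pd l (\<lambda>y. cvf g y $ m) x * \<xi> $ m)
    = - \<xi> $ l * pd tc g x + (\<Sum>r\<in>UNIV. Dsymb x \<xi> r * pd l (pd r g) x) - \<xi> $ tc * pd l g x"
proof -
  define Y where "Y m = Dsymb x \<xi> m" for m
  define h where "h r = pd r g x" for r
  define hh where "hh m r = pd m (pd r g) x" for m r
  have dZ: "pd m (\<lambda>y. cvf g y $ j) x
      = - (\<Sum>r\<in>UNIV. Dmat1 j r m * h r + Dmat j r x * hh m r) - 2 * ind_tc j * h m" for m j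
    unfolding h_def hh_def by (rule pd_cvf[OF g])
  have "(\<Sum>m\<in>UNIV. pd l (\<lambda>y. cvf g y $ m) x * \<xi> $ m)
     = - (\<Sum>m\<in>UNIV. \<Sum>r\<in>UNIV. Dmat1 m r l * \<xi> $ m * h r) - (\<Sum>m\<in>UNIV. \<Sum>r\<in>UNIV. hh l r * (Dmat m r x * \<xi> $ m))
       - 2 * \<xi> $ tc * h l"
    unfolding dZ by (simp add: sum.distrib sum_subtractf sum_negf sum_distrib_left sum_distrib_right algebra_simps)
  also have "(\<Sum>m\<in>UNIV. \<Sum>r\<in>UNIV. Dmat1 m r l * \<xi> $ m * h r) = \<xi> $ l * h tc - \<xi> $ tc * h l"
    by (rule sum_Dmat1_21[of l "\<lambda>m. \<xi> $ m", simplified])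
  also have "(\<Sum>m\<in>UNIV. \<Sum>r\<in>UNIV. hh l r * (Dmat m r x * \<xi> $ m)) = (\<Sum>r\<in>UNIV. hh l r * (\<Sum>m\<in>UNIV. Dmat m r x * \<xi> $ m))"
    by (subst sum.swap) (simp add: sum_distrib_left)
  also have "(\<Sum>r\<in>UNIV. hh l r * (\<Sum>m\<in>UNIV. Dmat m r x * \<xi> $ m)) = - (\<Sum>r\<in>UNIV. Y r * hh l r)"
    unfolding sum_Dmat_fibre Y_def by (simp add: sum_negf algebra_simps)
  finally show ?thesis
    unfolding Y_def[symmetric] h_def[symmetric] hh_def[symmetric]
    by (simp add: algebra_simps)
qed

lemma sum_Dsymb_pd_cvf:
  assumes g: "smooth_fun g"
  shows "(\<Sum>m\<in>UNIV. Dsymb x \<xi> m * pd m (\<lambda>y. cvf g y $ j) x)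
    = - pd tc g x * Dsymb x \<xi> j - ind_tc j * (\<Sum>r\<in>UNIV. Dsymb x \<xi> r * pd r g x)
      - (\<Sum>r\<in>UNIV. Dmat j r x * (\<Sum>m\<in>UNIV. Dsymb x \<xi> m * pd m (pd r g) x))"
proof -
  define Y where "Y m = Dsymb x \<xi> m" for m
  define h where "h r = pd r g x" for r
  define hh where "hh m r = pd m (pd r g) x" for m r
  have "(\<Sum>m\<in>UNIV. Y m * pd m (\<lambda>y. cvf g y $ j) x)
     = - (\<Sum>m\<in>UNIV. \<Sum>r\<in>UNIV. Y m * Dmat1 j r m * h r) - (\<Sum>m\<in>UNIV. \<Sum>r\<in>UNIV. Y m * (Dmat j r x * hh m r))
       - 2 * ind_tc j * (\<Sum>m\<in>UNIV. Y m * h m)"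
    unfolding pd_cvf[OF g] h_def hh_def
    by (simp add: sum.distrib sum_subtractf sum_negf sum_distrib_left algebra_simps)
  also have "(\<Sum>m\<in>UNIV. \<Sum>r\<in>UNIV. Y m * Dmat1 j r m * h r) = h tc * Y j - ind_tc j * (\<Sum>r\<in>UNIV. Y r * h r)"
    by (simp add: sum_Dmat1_23)
  also have "(\<Sum>m\<in>UNIV. \<Sum>r\<in>UNIV. Y m * (Dmat j r x * hh m r)) = (\<Sum>r\<in>UNIV. Dmat j r x * (\<Sum>m\<in>UNIV. Y m * hh m r))"
    by (subst sum.swap) (simp add: sum_distrib_left algebra_simps)
  finally show ?thesis
    unfolding Y_def[symmetric] h_def[symmetric] hh_def[symmetric]
    by (cases "j = tc") (simp_all add: algebra_simps)
qed

lemma sum_cvf_pd_Dsymb: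
  "(\<Sum>m\<in>UNIV. cvf g x $ m * pd m (\<lambda>y. Dsymb y \<xi> j) x)
    = \<xi> $ tc * cvf g x $ j - ind_tc j * (\<Sum>m\<in>UNIV. cvf g x $ m * \<xi> $ m)"
proof -
  have "(\<Sum>m\<in>UNIV. cvf g x $ m * pd m (\<lambda>y. Dsymb y \<xi> j) x)
      = (\<Sum>m\<in>UNIV. \<Sum>l\<in>UNIV. cvf g x $ m * Dmat1 j l m * \<xi> $ l)"
    unfolding pd_Dsymb by (simp add: sum_distrib_left algebra_simps)
  also have "\<dots> = \<xi> $ tc * cvf g x $ j - ind_tc j * (\<Sum>m\<in>UNIV. cvf g x $ m * \<xi> $ m)"
    by (simp add: sum_Dmat1_23)
  finally show ?thesis .
qed

lemma sum_cvf_fibre: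
  "(\<Sum>m\<in>UNIV. cvf g x $ m * \<xi> $ m) = (\<Sum>r\<in>UNIV. Dsymb x \<xi> r * pd r g x) - 2 * g x * \<xi> $ tc"
proof -
  have "(\<Sum>m\<in>UNIV. cvf g x $ m * \<xi> $ m)
      = - (\<Sum>m\<in>UNIV. \<Sum>r\<in>UNIV. pd r g x * (Dmat m r x * \<xi> $ m)) - 2 * g x * \<xi> $ tc"
    unfolding cvf_nth by (simp add: sum_subtractf sum_negf sum_distrib_left sum_distrib_right algebra_simps)
  also have "(\<Sum>m\<in>UNIV. \<Sum>r\<in>UNIV. pd r g x * (Dmat m r x * \<xi> $ m))
      = (\<Sum>r\<in>UNIV. pd r g x * (\<Sum>m\<in>UNIV. Dmat m r x * \<xi> $ m))"
    by (subst sum.swap) (simp add: sum_distrib_left)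
  finally show ?thesis unfolding sum_Dmat_fibre by (simp add: sum_negf algebra_simps)
qed

lemma commutator_cvf_first_order:
  fixes g :: "real^('n::finite idx) \<Rightarrow> real" and x \<xi> :: "real^('n idx)"
  assumes g: "smooth_fun g"
  shows "(\<Sum>m\<in>UNIV. Dsymb x \<xi> m * pd m (\<lambda>y. cvf g y $ j) x - cvf g x $ m * pd m (\<lambda>y. Dsymb y \<xi> j) x)
      + (\<Sum>l\<in>UNIV. (\<Sum>m\<in>UNIV. pd l (\<lambda>y. cvf g y $ m) x * \<xi> $ m) * Dmat j l x)
      + (\<delta> - (\<delta> + 1 / (real CARD('n) + 1))) * (\<Sum>j\<in>UNIV. pd j (\<lambda>y. cvf g y $ j) x) * Dsymb x \<xi> j = 0"
proof -
  have "(\<Sum>l\<in>UNIV. (\<Sum>m\<in>UNIV. pd l (\<lambda>y. cvf g y $ m) x * \<xi> $ m) * Dmat j l x)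
     = - pd tc g x * (\<Sum>l\<in>UNIV. Dmat j l x * \<xi> $ l)
       + (\<Sum>l\<in>UNIV. Dmat j l x * (\<Sum>r\<in>UNIV. Dsymb x \<xi> r * pd l (pd r g) x))
       - \<xi> $ tc * (\<Sum>l\<in>UNIV. Dmat j l x * pd l g x)"
    unfolding pd_cvf_contract[OF g]
    by (simp add: sum.distrib sum_subtractf sum_negf sum_distrib_left sum_distrib_right algebra_simps)
  also have "(\<Sum>l\<in>UNIV. Dmat j l x * (\<Sum>r\<in>UNIV. Dsymb x \<xi> r * pd l (pd r g) x))
      = (\<Sum>l\<in>UNIV. Dmat j l x * (\<Sum>r\<in>UNIV. Dsymb x \<xi> r * pd r (pd l g) x))"
    by (simp add: pd_commute[OF g, of _ _ x])
  finally have contract: "(\<Sum>l\<in>UNIV. (\<Sum>m\<in>UNIV. pd l (\<lambda>y. cvf g y $ m) x * \<xi> $ m) * Dmat j l x)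
     = - pd tc g x * Dsymb x \<xi> j + (\<Sum>l\<in>UNIV. Dmat j l x * (\<Sum>r\<in>UNIV. Dsymb x \<xi> r * pd r (pd l g) x))
       + \<xi> $ tc * (cvf g x $ j + 2 * ind_tc j * g x)"
    by (simp add: Dsymb_def cvf_nth)
  have "(\<delta> - (\<delta> + 1 / (real CARD('n) + 1))) * (- 2 * (real CARD('n) + 1) * pd tc g x) = 2 * pd tc g x"
    using card_plus_1_neq_0[where 'n='n] by (simp add: field_simps)
  then show ?thesis
    unfolding sum_subtractf sum_Dsymb_pd_cvf[OF g] sum_cvf_pd_Dsymb sum_cvf_fibre contract div_cvf[OF g]
    by (simp add: algebra_simps)
qed

lemma commutator_cvf_zero_order:
  fixes g :: "real^('n::finite idx) \<Rightarrow> real" and x \<xi> :: "real^('n idx)" and \<delta> :: real and k :: nat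
  assumes g: "smooth_fun g"
  defines "a \<equiv> 2 * (real CARD('n) + 1) * \<delta> - real k"
  shows "\<delta> * (\<Sum>m\<in>UNIV. Dsymb x \<xi> m * pd m (\<lambda>y. \<Sum>j\<in>UNIV. pd j (\<lambda>y. cvf g y $ j) y) x)
         + a * (\<Sum>j\<in>UNIV. pd tc (\<lambda>y. cvf g y $ j) x * \<xi> $ j)
         + a * (\<delta> - (\<delta> + 1 / (real CARD('n) + 1))) * \<xi> $ tc * (\<Sum>j\<in>UNIV. pd j (\<lambda>y. cvf g y $ j) x)
       = - real k * (\<Sum>m\<in>UNIV. Dsymb x \<xi> m * pd m (pd tc g) x)"
proof -
  have sym: "pd tc (pd r g) x = pd r (pd tc g) x" for r by (rule pd_commute[OF g])
  have c: "(\<delta> - (\<delta> + 1 / (real CARD('n) + 1))) * (- 2 * (real CARD('n) + 1) * pd tc g x) = 2 * pd tc g x"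
    using card_plus_1_neq_0[where 'n='n] by (simp add: field_simps)
  define C where "C = (\<Sum>m\<in>UNIV. Dsymb x \<xi> m * pd m (pd tc g) x)"
  have f1: "\<delta> * (\<Sum>m\<in>UNIV. Dsymb x \<xi> m * pd m (\<lambda>y. \<Sum>j\<in>UNIV. pd j (\<lambda>y. cvf g y $ j) y) x)
      = - 2 * (real CARD('n) + 1) * \<delta> * C"
    unfolding pd_div_cvf[OF g] C_def sum_cmult_inner by (simp add: algebra_simps)
  have f2: "(\<Sum>j\<in>UNIV. pd tc (\<lambda>y. cvf g y $ j) x * \<xi> $ j) = C - 2 * \<xi> $ tc * pd tc g x"
    unfolding pd_cvf_contract[OF g] sym C_def by simp
  have f3: "a * (\<delta> - (\<delta> + 1 / (real CARD('n) + 1))) * \<xi> $ tc * (\<Sum>j\<in>UNIV. pd j (\<lambda>y. cvf g y $ j) x)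
      = a * \<xi> $ tc * (2 * pd tc g x)"
  proof -
    have "a * (\<delta> - (\<delta> + 1 / (real CARD('n) + 1))) * \<xi> $ tc * (- 2 * (real CARD('n) + 1) * pd tc g x)
      = a * \<xi> $ tc * ((\<delta> - (\<delta> + 1 / (real CARD('n) + 1))) * (- 2 * (real CARD('n) + 1) * pd tc g x))"
      by (simp only: mult_ac)
    then show ?thesis unfolding div_cvf[OF g] c .
  qed
  show ?thesis unfolding f1 f2 f3 C_def[symmetric] unfolding a_def by (simp add: algebra_simps)
qed

lemma commutator_cvf_fibre_order:
  fixes g :: "real^('n::finite idx) \<Rightarrow> real" and x \<xi> :: "real^('n idx)"
  assumes g: "smooth_fun g"
  shows "(\<Sum>m\<in>UNIV. Dsymb x \<xi> m * (\<Sum>j\<in>UNIV. pd m (pd l (\<lambda>y. cvf g y $ j)) x * \<xi> $ j))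
    = - \<xi> $ l * (\<Sum>m\<in>UNIV. Dsymb x \<xi> m * pd m (pd tc g) x)
      + (\<Sum>m\<in>UNIV. \<Sum>r\<in>UNIV. Dsymb x \<xi> m * Dsymb x \<xi> r * pd m (pd l (pd r g)) x)"
proof -
  define Y where "Y m = Dsymb x \<xi> m" for m
  define hh where "hh m r = pd m (pd r g) x" for m r
  define hhh where "hhh m l r = pd m (pd l (pd r g)) x" for m l r
  have hh_sym: "hh m r = hh r m" for m r unfolding hh_def by (rule pd_commute[OF g])
  have inner: "(\<Sum>j\<in>UNIV. pd m (pd l (\<lambda>y. cvf g y $ j)) x * \<xi> $ j)
      = - \<xi> $ l * hh m tc - \<xi> $ m * hh l tc + (\<Sum>r\<in>UNIV. Y r * hhh m l r)" for m
  proof -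
    have "(\<Sum>j\<in>UNIV. pd m (pd l (\<lambda>y. cvf g y $ j)) x * \<xi> $ j)
      = - (\<Sum>j\<in>UNIV. \<Sum>r\<in>UNIV. Dmat1 j r l * \<xi> $ j * hh m r) - (\<Sum>j\<in>UNIV. \<Sum>r\<in>UNIV. Dmat1 j r m * \<xi> $ j * hh l r)
        - (\<Sum>j\<in>UNIV. \<Sum>r\<in>UNIV. hhh m l r * (Dmat j r x * \<xi> $ j)) - 2 * \<xi> $ tc * hh m l"
      unfolding pd2_cvf[OF g] hh_def hhh_def
      by (simp add: sum.distrib sum_subtractf sum_negf sum_distrib_left sum_distrib_right algebra_simps)
    also have "(\<Sum>j\<in>UNIV. \<Sum>r\<in>UNIV. Dmat1 j r l * \<xi> $ j * hh m r) = \<xi> $ l * hh m tc - \<xi> $ tc * hh m l"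
      by (rule sum_Dmat1_21[of l "\<lambda>m. \<xi> $ m", simplified])
    also have "(\<Sum>j\<in>UNIV. \<Sum>r\<in>UNIV. Dmat1 j r m * \<xi> $ j * hh l r) = \<xi> $ m * hh l tc - \<xi> $ tc * hh l m"
      by (rule sum_Dmat1_21[of m "\<lambda>m. \<xi> $ m", simplified])
    also have "(\<Sum>j\<in>UNIV. \<Sum>r\<in>UNIV. hhh m l r * (Dmat j r x * \<xi> $ j)) = (\<Sum>r\<in>UNIV. hhh m l r * (\<Sum>j\<in>UNIV. Dmat j r x * \<xi> $ j))"
      by (subst sum.swap) (simp add: sum_distrib_left)
    also have "(\<Sum>r\<in>UNIV. hhh m l r * (\<Sum>j\<in>UNIV. Dmat j r x * \<xi> $ j)) = - (\<Sum>r\<in>UNIV. Y r * hhh m l r)"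
      unfolding sum_Dmat_fibre Y_def by (simp add: sum_negf algebra_simps)
    finally show ?thesis using hh_sym[of l m] by (simp add: algebra_simps)
  qed
  have "(\<Sum>m\<in>UNIV. Y m * (\<Sum>j\<in>UNIV. pd m (pd l (\<lambda>y. cvf g y $ j)) x * \<xi> $ j))
     = - \<xi> $ l * (\<Sum>m\<in>UNIV. Y m * hh m tc) - (\<Sum>m\<in>UNIV. Y m * \<xi> $ m) * hh l tc
       + (\<Sum>m\<in>UNIV. \<Sum>r\<in>UNIV. Y m * Y r * hhh m l r)"
    unfolding inner by (simp add: sum.distrib sum_subtractf sum_negf sum_distrib_left sum_distrib_right algebra_simps)
  also have "(\<Sum>m\<in>UNIV. Y m * \<xi> $ m) = 0" unfolding Y_def by (rule Dsymb_orthogonal)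
  finally show ?thesis unfolding Y_def hh_def hhh_def by simp
qed

lemma commutator_formula_cvf:
  fixes g :: "real^('n::finite idx) \<Rightarrow> real" and S :: "real^('n idx) \<Rightarrow> real^('n idx) \<Rightarrow> real"
    and \<delta> :: real and x \<xi> :: "real^('n idx)" and k :: nat
  assumes g: "smooth_fun g" and H: "\<And>y. hom_poly k (S y)" and Sm: "\<And>\<eta>. smooth_fun (\<lambda>y. S y \<eta>)"
  shows "Xop k \<delta> (Lder \<delta> (cvf g) S) x \<xi> - Lder (\<delta> + 1 / (real CARD('n) + 1)) (cvf g) (Xop k \<delta> S) x \<xi>
    = - (\<Sum>l\<in>UNIV. (\<Sum>m\<in>UNIV. \<Sum>r\<in>UNIV. Dsymb x \<xi> m * Dsymb x \<xi> r * pd m (pd l (pd r g)) x) * pd l (S x) \<xi>)"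
proof -
  define C where "C = (\<Sum>m\<in>UNIV. Dsymb x \<xi> m * pd m (pd tc g) x)"
  define T where "T l = (\<Sum>m\<in>UNIV. \<Sum>r\<in>UNIV. Dsymb x \<xi> m * Dsymb x \<xi> r * pd m (pd l (pd r g)) x)" for l
  have Zs: "\<And>j. smooth_fun (\<lambda>y. cvf g y $ j)" by (rule smooth_cvf[OF g])
  note st = commutator_formula[OF Zs H Sm, where \<delta>'="\<delta> + 1 / (real CARD('n) + 1)" and \<delta>=\<delta> and x=x and \<xi>=\<xi>]
  have E: "(\<Sum>l\<in>UNIV. (\<Sum>m\<in>UNIV. Dsymb x \<xi> m * (\<Sum>j\<in>UNIV. pd m (pd l (\<lambda>y. cvf g y $ j)) x * \<xi> $ j)) * pd l (S x) \<xi>)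
     = - C * (\<Sum>l\<in>UNIV. \<xi> $ l * pd l (S x) \<xi>) + (\<Sum>l\<in>UNIV. T l * pd l (S x) \<xi>)"
    unfolding commutator_cvf_fibre_order[OF g] C_def[symmetric] T_def[symmetric]
    by (simp add: sum.distrib sum_distrib_left algebra_simps sum_subtractf sum_negf)
  show ?thesis
    unfolding st commutator_cvf_first_order[OF g] commutator_cvf_zero_order[OF g] E hom_poly_euler[OF H]
      C_def[symmetric] T_def[symmetric]
    by (simp add: algebra_simps)
qed

section \<open>Contact Hamiltonians of projective vector fields\<close>

definition affine_fun :: "(real^'i::finite \<Rightarrow> real) \<Rightarrow> bool" where
  "affine_fun F \<longleftrightarrow> (\<exists>c b. F = (\<lambda>y. c + (\<Sum>s\<in>UNIV. b s * y $ s)))"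

lemma affine_fun_smooth: "affine_fun F \<Longrightarrow> smooth_fun F"
  unfolding affine_fun_def by (auto intro!: smooth_add smooth_const smooth_sum smooth_cmult smooth_coord)

lemma affine_fun_pd: "affine_fun F \<Longrightarrow> \<exists>c. pd l F = (\<lambda>y. c)"
proof -
  assume "affine_fun F"
  then obtain c b where F: "F = (\<lambda>y. c + (\<Sum>s\<in>UNIV. b s * y $ s))" unfolding affine_fun_def by blast
  have "pd l F y = b l" for y
  proof -
    have "pd l F y = pd l (\<lambda>y. (\<Sum>s\<in>UNIV. b s * y $ s)) y"
      unfolding F by (subst pd_add) (auto intro!: pd_differentiable_sum pd_differentiable_mult)
    also have "\<dots> = (\<Sum>s\<in>UNIV. b s * (if s = l then 1 else 0))"
      by (subst pd_sum) (auto intro!: pd_differentiable_mult simp: pd_cmult)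
    also have "\<dots> = b l" by simp
    finally show ?thesis .
  qed
  then show ?thesis by blast
qed

lemma affine_fun_const [simp]: "affine_fun (\<lambda>y. c)"
  unfolding affine_fun_def by (rule exI[of _ c], rule exI[of _ "\<lambda>s. 0"]) simp

lemma affine_fun_coord [simp]: "affine_fun (\<lambda>y. y $ r)"
  unfolding affine_fun_def by (rule exI[of _ 0], rule exI[of _ "\<lambda>s. if s = r then 1 else 0"]) simp

lemma affine_fun_add: "affine_fun F \<Longrightarrow> affine_fun G \<Longrightarrow> affine_fun (\<lambda>y. F y + G y)"
proof -
  assume "affine_fun F" "affine_fun G"
  then obtain c b c' b' where "F = (\<lambda>y. c + (\<Sum>s\<in>UNIV. b s * y $ s))" "G = (\<lambda>y. c' + (\<Sum>s\<in>UNIV. b' s * y $ s))"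
    unfolding affine_fun_def by blast
  then show ?thesis unfolding affine_fun_def
    by (intro exI[of _ "c + c'"] exI[of _ "\<lambda>s. b s + b' s"]) (auto simp: fun_eq_iff algebra_simps sum.distrib)
qed

lemma affine_fun_cmult: "affine_fun F \<Longrightarrow> affine_fun (\<lambda>y. a * F y)"
proof -
  assume "affine_fun F"
  then obtain c b where "F = (\<lambda>y. c + (\<Sum>s\<in>UNIV. b s * y $ s))" unfolding affine_fun_def by blast
  then show ?thesis unfolding affine_fun_def
    by (intro exI[of _ "a * c"] exI[of _ "\<lambda>s. a * b s"]) (auto simp: fun_eq_iff algebra_simps sum_distrib_left)
qed

lemma affine_fun_sum: "(\<And>i. i \<in> A \<Longrightarrow> affine_fun (F i)) \<Longrightarrow> affine_fun (\<lambda>y. \<Sum>i\<in>A. F i y)"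
proof (induction A rule: infinite_finite_induct)
  case (insert a A)
  have e: "(\<lambda>y. \<Sum>i\<in>insert a A. F i y) = (\<lambda>y. F a y + (\<Sum>i\<in>A. F i y))"
    using insert(1,2) by (simp add: sum.insert)
  show ?case unfolding e using insert by (intro affine_fun_add) auto
qed simp_all

definition quadratic_fun :: "(real^'i::finite \<Rightarrow> real) \<Rightarrow> bool" where
  "quadratic_fun Q \<longleftrightarrow> smooth_fun Q \<and> (\<forall>r. affine_fun (pd r Q))"

lemma quadratic_fun_add: "quadratic_fun P \<Longrightarrow> quadratic_fun Q \<Longrightarrow> quadratic_fun (\<lambda>y. P y + Q y)"
proof -
  assume P: "quadratic_fun P" and Q: "quadratic_fun Q"
  have "pd r (\<lambda>y. P y + Q y) = (\<lambda>y. pd r P y + pd r Q y)" for r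
    using P Q unfolding quadratic_fun_def by (auto intro!: pd_add_smooth)
  then show ?thesis using P Q unfolding quadratic_fun_def by (auto intro: smooth_add affine_fun_add)
qed

lemma quadratic_fun_sum: "(\<And>i. i \<in> A \<Longrightarrow> quadratic_fun (F i)) \<Longrightarrow> quadratic_fun (\<lambda>y. \<Sum>i\<in>A. F i y)"
proof (induction A rule: infinite_finite_induct)
  case (insert a A)
  have e: "(\<lambda>y. \<Sum>i\<in>insert a A. F i y) = (\<lambda>y. F a y + (\<Sum>i\<in>A. F i y))"
    using insert(1,2) by (simp add: sum.insert)
  show ?case unfolding e using insert by (intro quadratic_fun_add) auto
next
  case (infinite A) then show ?case by (simp add: quadratic_fun_def pd_const_fun)
next
  case empty then show ?case by (simp add: quadratic_fun_def pd_const_fun)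
qed

lemma quadratic_fun_mult: "affine_fun F \<Longrightarrow> affine_fun G \<Longrightarrow> quadratic_fun (\<lambda>y. F y * G y)"
proof -
  assume F: "affine_fun F" and G: "affine_fun G"
  have sF: "smooth_fun F" and sG: "smooth_fun G" using F G by (auto intro: affine_fun_smooth)
  show ?thesis unfolding quadratic_fun_def
  proof (intro conjI allI)
    show "smooth_fun (\<lambda>y. F y * G y)" using sF sG by (rule smooth_mult)
    fix r
    obtain a where a: "pd r F = (\<lambda>y. a)" using affine_fun_pd[OF F] by blast
    obtain b where b: "pd r G = (\<lambda>y. b)" using affine_fun_pd[OF G] by blast
    have "pd r (\<lambda>y. F y * G y) = (\<lambda>y. a * G y + b * F y)"
    proof
      fix y show "pd r (\<lambda>y. F y * G y) y = a * G y + b * F y"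
        using pd_mult_smooth[OF sF sG, of r y] fun_cong[OF a, of y] fun_cong[OF b, of y] by simp
    qed
    then show "affine_fun (pd r (\<lambda>y. F y * G y))" using F G by (auto intro: affine_fun_add affine_fun_cmult)
  qed
qed

lemma pd3_quadratic_fun: "quadratic_fun Q \<Longrightarrow> pd m (pd l (pd r Q)) x = 0"
proof -
  assume "quadratic_fun Q"
  then have "affine_fun (pd r Q)" unfolding quadratic_fun_def by blast
  then obtain c where "pd l (pd r Q) = (\<lambda>y. c)" using affine_fun_pd by blast
  then show ?thesis by simp
qed

lemma alpha_Euler: "(\<Sum>l\<in>UNIV. alpha y l * y $ l) = - (y $ tc) / 2"
  by (simp add: sum_idx algebra_simps sum.distrib sum_negf)

lemma affine_fun_half:
  "affine_fun (\<lambda>y. y $ j / 2)" "affine_fun (\<lambda>y. - (y $ j / 2))"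
  unfolding affine_fun_def
  by (rule exI[of _ 0], rule exI[of _ "\<lambda>s. if s = j then 1/2 else 0"], simp add: fun_eq_iff)
     (rule exI[of _ 0], rule exI[of _ "\<lambda>s. if s = j then -1/2 else 0"], simp add: fun_eq_iff)

lemma affine_fun_alpha: "affine_fun (\<lambda>y. alpha y l)"
  by (cases l rule: idx_cases) (simp_all add: affine_fun_half)

lemma sl_vf_contact_hamiltonian_quadratic:
  fixes Z :: "real^('n::finite idx) \<Rightarrow> real^('n idx)"
  assumes "sl_vf Z"
  shows "quadratic_fun (contact_hamiltonian Z)"
proof -
  obtain c A \<eta> where Z: "\<And>x. Z x = c + A *v x + (\<eta> \<bullet> x) *\<^sub>R x"
    using assms unfolding sl_vf_def by blast
  have "contact_hamiltonian Z y = (\<Sum>j\<in>UNIV. alpha y j * (c $ j + (\<Sum>r\<in>UNIV. A $ j $ r * y $ r)))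
      + (\<Sum>r\<in>UNIV. \<eta> $ r * y $ r) * (\<Sum>j\<in>UNIV. alpha y j * y $ j)" for y
  proof -
    have "contact_hamiltonian Z y = (\<Sum>j\<in>UNIV. alpha y j * (c $ j + (\<Sum>r\<in>UNIV. A $ j $ r * y $ r))
        + (\<Sum>r\<in>UNIV. \<eta> $ r * y $ r) * (alpha y j * y $ j))"
      unfolding contact_hamiltonian_def
      by (rule sum.cong) (simp_all add: Z matrix_vector_mult_def inner_vec_def algebra_simps)
    then show ?thesis by (simp add: sum.distrib sum_distrib_left)
  qed
  then have "contact_hamiltonian Z = (\<lambda>y. (\<Sum>j\<in>UNIV. alpha y j * (c $ j + (\<Sum>r\<in>UNIV. A $ j $ r * y $ r)))
      + (\<Sum>r\<in>UNIV. \<eta> $ r * y $ r) * ((- 1/2) * y $ tc))"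
    unfolding alpha_Euler by (simp add: fun_eq_iff)
  then show ?thesis
    by (simp only:) (intro quadratic_fun_add quadratic_fun_sum quadratic_fun_mult affine_fun_alpha
        affine_fun_add affine_fun_const affine_fun_sum affine_fun_cmult affine_fun_coord)
qed

lemma pd_cpow_coord:
  fixes y :: "real^'a::finite"
  shows "pd r (\<lambda>y. c * (y $ a) ^ n) y = (if a = r then c * real n * (y $ a) ^ (n - 1) else 0)"
  by (subst pd_cmult) (auto intro!: smooth_imp_pd_differentiable smooth_pow smooth_coord simp: pd_pow_coord)

lemma pd3_cube_coord:
  fixes x :: "real^'a::finite"
  shows "pd m (pd l (pd r (\<lambda>y. (y $ a) ^ 3))) x
    = (if m = a then 1 else 0) * ((if l = a then 1 else 0) * ((if r = a then 1 else 0) * 6))"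
proof (cases "r = a")
  case False
  have "pd r (\<lambda>y. (y $ a) ^ 3) = (\<lambda>y. 0)" using False by (auto simp: fun_eq_iff pd_pow_coord)
  then show ?thesis using False by (simp add: pd_const_fun)
next
  case True
  have e1: "pd r (\<lambda>y. (y $ a) ^ 3) = (\<lambda>y. 3 * (y $ a) ^ 2)" using True by (auto simp: fun_eq_iff pd_pow_coord)
  show ?thesis
  proof (cases "l = a")
    case False
    have "pd l (\<lambda>y. 3 * (y $ a) ^ 2) = (\<lambda>y. 0)" using False by (auto simp: fun_eq_iff pd_cpow_coord)
    then show ?thesis using False unfolding e1 by (simp add: pd_const_fun)
  next
    case True
    have e2: "pd l (\<lambda>y. 3 * (y $ a) ^ 2) = (\<lambda>y. 6 * y $ a)" using True by (auto simp: fun_eq_iff pd_cpow_coord)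
    have e3: "pd m (\<lambda>y. 6 * y $ a) x = (if m = a then 6 else 0)"
      by (auto simp: pd_cmult)
    show ?thesis using \<open>r = a\<close> True unfolding e1 e2 e3 by simp
  qed
qed

lemma contact_vf_commutator:
  fixes Z :: "real^('n::finite idx) \<Rightarrow> real^('n idx)"
  assumes Z: "contact_vf Z" and S: "symbol k S"
  shows "Xop k \<delta> (Lder \<delta> Z S) x \<xi> - Lder (\<delta> + 1 / (real CARD('n) + 1)) Z (Xop k \<delta> S) x \<xi>
    = - (\<Sum>l\<in>UNIV. (\<Sum>m\<in>UNIV. \<Sum>r\<in>UNIV. Dsymb x \<xi> m * Dsymb x \<xi> r
          * pd m (pd l (pd r (contact_hamiltonian Z))) x) * pd l (S x) \<xi>)"
proof -
  have g: "smooth_fun (contact_hamiltonian Z)"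
    using Z unfolding contact_vf_def by (blast intro: smooth_contact_hamiltonian)
  have H: "\<And>y. hom_poly k (S y)" and Sm: "\<And>\<eta>. smooth_fun (\<lambda>y. S y \<eta>)"
    using S unfolding symbol_def by auto
  have "cvf (contact_hamiltonian Z) = Z"
    using Z by (rule contact_vf_eq_cvf[symmetric])
  with commutator_formula_cvf[OF g H Sm, of \<delta> x \<xi>] show ?thesis
    by (simp only:)
qed

lemma sp_vf_commutes_Xop:
  fixes Z :: "real^('n::finite idx) \<Rightarrow> real^('n idx)"
  assumes "sp_vf Z" and "symbol k S"
  shows "Xop k \<delta> (Lder \<delta> Z S) = Lder (\<delta> + 1 / (real CARD('n) + 1)) Z (Xop k \<delta> S)"
proof (intro ext)
  fix x \<xi>
  have "quadratic_fun (contact_hamiltonian Z)"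
    using assms(1) unfolding sp_vf_def by (blast intro: sl_vf_contact_hamiltonian_quadratic)
  then show "Xop k \<delta> (Lder \<delta> Z S) x \<xi> = Lder (\<delta> + 1 / (real CARD('n) + 1)) Z (Xop k \<delta> S) x \<xi>"
    using contact_vf_commutator[of Z k S \<delta> x \<xi>] assms unfolding sp_vf_def
    by (simp add: pd3_quadratic_fun)
qed

lemma contact_vf_commutes_Xop_order_0:
  fixes Z :: "real^('n::finite idx) \<Rightarrow> real^('n idx)"
  assumes "contact_vf Z" and "symbol 0 S"
  shows "Xop 0 \<delta> (Lder \<delta> Z S) = Lder (\<delta> + 1 / (real CARD('n) + 1)) Z (Xop 0 \<delta> S)"
proof (intro ext)
  fix x \<xi>
  obtain c where "S x = (\<lambda>\<xi>. c)"
    using assms(2) unfolding symbol_def by auto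
  then show "Xop 0 \<delta> (Lder \<delta> Z S) x \<xi> = Lder (\<delta> + 1 / (real CARD('n) + 1)) Z (Xop 0 \<delta> S) x \<xi>"
    using contact_vf_commutator[OF assms, of \<delta> x \<xi>] by simp
qed

lemma symbol_pow_coord: "symbol k (\<lambda>y (\<eta>::real^'i::finite). (\<eta> $ j) ^ k)"
  unfolding symbol_def by (simp add: hom_poly_pow)

lemma cube_cvf_commutator:
  fixes i :: "'n::finite" and k :: nat
  defines "g \<equiv> \<lambda>x :: real^('n idx). (x $ qc i) ^ 3"
    and "S \<equiv> \<lambda>(y :: real^('n idx)) \<eta>. (\<eta> $ qc i) ^ k"
    and "\<xi> \<equiv> axis (pc i) 1 + axis (qc i) (1 :: real)"
  shows "Xop k \<delta> (Lder \<delta> (cvf g) S) 0 \<xi> - Lder (\<delta> + 1 / (real CARD('n) + 1)) (cvf g) (Xop k \<delta> S) 0 \<xi>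
    = - 6 * real k"
proof -
  have Z: "contact_vf (cvf g)" unfolding g_def by (intro contact_vf_cvf smooth_pow smooth_coord)
  have Y: "Dsymb 0 \<xi> (qc i) = -1"
    unfolding \<xi>_def by (simp add: axis_1_nth)
  have E: "pd l (S 0) \<xi> = (if l = qc i then real k else 0)" for l
    unfolding S_def \<xi>_def by (simp add: pd_pow_coord axis_1_nth)
  have T: "(\<Sum>m\<in>UNIV. \<Sum>r\<in>UNIV. Dsymb 0 \<xi> m * Dsymb 0 \<xi> r * pd m (pd l (pd r g)) 0)
      = (if l = qc i then 6 else 0)" for l
    unfolding g_def pd3_cube_coord using Y by (simp add: mult_ac)
  have "symbol k S"
    unfolding S_def by (rule symbol_pow_coord)
  from contact_vf_commutator[OF Z this, of \<delta> 0 \<xi>]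
  show ?thesis
    unfolding contact_hamiltonian_cvf T E by simp
qed

lemma cube_cvf_not_commutes_Xop:
  fixes i :: "'n::finite"
  assumes "1 \<le> k"
  shows "\<exists>S. symbol k S \<and> Xop k \<delta> (Lder \<delta> (cvf (\<lambda>x. (x $ qc i) ^ 3)) S)
      \<noteq> Lder (\<delta> + 1 / (real CARD('n) + 1)) (cvf (\<lambda>x. (x $ qc i) ^ 3)) (Xop k \<delta> S)"
proof (intro exI conjI)
  show "symbol k (\<lambda>y \<eta>. (\<eta> $ qc i) ^ k)"
    by (rule symbol_pow_coord)
  show "Xop k \<delta> (Lder \<delta> (cvf (\<lambda>x. (x $ qc i) ^ 3)) (\<lambda>y \<eta>. (\<eta> $ qc i) ^ k))
      \<noteq> Lder (\<delta> + 1 / (real CARD('n) + 1)) (cvf (\<lambda>x. (x $ qc i) ^ 3)) (Xop k \<delta> (\<lambda>y \<eta>. (\<eta> $ qc i) ^ k))"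
    using cube_cvf_commutator[where i = i and k = k and \<delta> = \<delta>] assms by force
qed

theorem mainTheorem3:
  fixes k :: nat and \<delta> :: real
  shows "(\<forall>(Z :: real^('n::finite idx) \<Rightarrow> real^('n idx)) S.
            sp_vf Z \<longrightarrow> symbol k S \<longrightarrow>
            Xop k \<delta> (Lder \<delta> Z S) = Lder (\<delta> + 1 / (real CARD('n) + 1)) Z (Xop k \<delta> S))
       \<and> (k = 0 \<longrightarrow>
            (\<forall>(Z :: real^('n idx) \<Rightarrow> real^('n idx)) S.
              contact_vf Z \<longrightarrow> symbol k S \<longrightarrow>
              Xop k \<delta> (Lder \<delta> Z S) = Lder (\<delta> + 1 / (real CARD('n) + 1)) Z (Xop k \<delta> S)))
       \<and> (k \<ge> 1 \<longrightarrow>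
            (\<forall>i :: 'n. contact_vf (cvf (\<lambda>x. (x $ qc i) ^ 3)) \<and>
              (\<exists>S. symbol k S \<and>
                 Xop k \<delta> (Lder \<delta> (cvf (\<lambda>x. (x $ qc i) ^ 3)) S)
                   \<noteq> Lder (\<delta> + 1 / (real CARD('n) + 1)) (cvf (\<lambda>x. (x $ qc i) ^ 3)) (Xop k \<delta> S))))"
  using sp_vf_commutes_Xop contact_vf_commutes_Xop_order_0 cube_cvf_not_commutes_Xop
    contact_vf_cvf[OF smooth_pow[OF smooth_coord]]
  by auto

end
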